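(* Assume the axiomatic setting described in the context, with Axioms (A1)–(A5). Let $T_1,\dots,T_N$ be an $(N,\delta)$-hairbrush. Then for every $\epsilon>0$ and every $p$ with $\frac{\alpha+2}{\alpha+1}\le p\le2$, $$\int\Big(\sum_{j=1}^N\chi_{T_j}\Big)^p\,d\mu\le C_{p,\epsilon}\,\delta^T N\,\delta^{\lambda+\alpha+1-p(\lambda+\alpha)-\epsilon},$$ where $C_{p,\epsilon}$ depends only on $p$, $\epsilon$ and the data of the setting.
   Context: Let $(X,d)$ be a complete separable metric space with a Borel measure $\mu$ and constants $Q>1/2$, $C_0\in(0,\infty)$ such that $\mu(B_d(x,r))\le C_0r^Q$ for all $x\in X$ and $0<r<\mathrm{diam}_d(X)$ ($B_d$ closed balls). Let $d'$ be a second metric on $X$ with $(X,d')$ separable. Let $(Z,d_Z)$ be a metric space, $Y\subset Z$ compact, $\nu$ a Borel measure on $Z$ with $0<\nu(Y)\le1$, and $1\le S<2Q$, $0<\tilde c_0\le\tilde C_0$ with $\tilde c_0r^S\le\nu(B_{d_Z}(u,r))\le\tilde C_0r^S$ for $u\in Y$, $0<r<\mathrm{diam}_{d_Z}(Y)$. Let $\mathcal A$ be a set of parameters; to each $a\in\mathcal A$, $u\in Y$ are associated $F_u(a)\subset I_u(a)\subset\tilde I_u(a)\subset X$ with $c\le\mathrm{diam}_{d'}I_u(a)\le c'$, $\mathrm{diam}_{d'}\tilde I_u(a)\le\bar c\,\mathrm{diam}_{d'}I_u(a)$, and a doubling measure $\mu_{u,a}$ of total mass $1$ on $F_u(a)$.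 For $0<\delta<1$, $T^\delta_u(a)=\{x:d(x,I_u(a))\le\delta\}$, $\tilde T^{W\delta}_u(a)=\{x:d(x,\tilde I_u(a))\le W\delta\}$, with $W$ from (A4). Axioms: (A1) $u\mapsto\mu(T^\delta_u(a))$ is continuous on $Y$; there are $S/2<T<Q$, $0<c_1\le c_2$ with $c_1\delta^T\le\mu(T^\delta_u(a))\le\mu(\tilde T^{W\delta}_u(a))\le c_2\delta^T$, and $\mu(A)\le c_2\,\mathrm{diam}_{d'}(A)\delta^T$ for $A\subset\tilde T^{W\delta}_u(a)$. (A2) There are $0\le\theta<\frac{2Q-2T+S}{S+2}$, $K'>0$, $K\ge1$ such that for all $a,u$, $x\in F_u(a)$, $\delta\le r\le2\delta$: if $\mu_{u,a}(F_u(a)\cap B_d(x,r))=M>0$ then $\mu(T^\delta_u(a)\cap B_d(x,Kr))\ge K'M\delta^\theta\mu(T^\delta_u(a))$. (A3) There is $b>0$ with $\mathrm{diam}_{d'}(\tilde T^{W\delta}_u(a)\cap\tilde T^{W\delta}_v(a'))\le b\delta/d_Z(u,v)$. (A4) There are $0<W,\bar N<\infty$ such that if $d_Z(u,v)\le\delta$, $a\in\mathcal A$, then $T^\delta_u(a)$ is covered by at most $\bar N$ tubes $\tilde T^{W\delta}_v(b_k)$, $b_k\in\mathcal A$. (A5) There are constants $\alpha,\lambda$ with $0\le\alpha\le\min\{Q/\theta-2,S-1\}$ (only $0\le\alpha\le S-1$ if $\theta=0$), $\max\{S-\alpha,S-2T+2\}\le\lambda<2Q-2T+S+2-2\theta(\alpha+2)$,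 and $C'>0$, such that: whenever $0<\delta,\beta,\gamma<1$, $T_j=\tilde T^{W\delta}_{u_j}(a_j)$ ($j=1,\dots,N$) with $d_Z(u_j,u_k)>\delta$ for $j\ne k$, and $T=\tilde T^{W\delta}_u(a)$ satisfies $T\cap T_j\neq\emptyset$ and $d_Z(u_j,u)\ge\beta/8$ for all $j$, then for every $j$, $\#\{i:d_Z(u_i,u_j)\le\beta,\ T_i\cap T_j\ne\emptyset,\ d'(T_i\cap T_j,T_j\cap T)\ge\gamma\}\le C'\delta^{-\lambda}\beta\gamma^{-\alpha}$, where $d'(A,B)=\inf\{d'(x,y):x\in A,y\in B\}$. An $(N,\delta)$-hairbrush is a collection of tubes $T_j=\tilde T^{W\delta}_{u_j}(a_j)$, $j=1,\dots,N$, with $d_Z(u_j,u_k)>\delta$ for $j\ne k$, for which there is a tube $T=\tilde T^{W\delta}_u(a)$ with $T\cap T_j\ne\emptyset$ for all $j$. *)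

theory Defs
  imports "HOL-Analysis.Analysis" "HOL-Probability.Probability"
begin

definition diam2 :: "('x \<Rightarrow> 'x \<Rightarrow> real) \<Rightarrow> 'x set \<Rightarrow> ennreal" where
  "diam2 d' A = (SUP x\<in>A. SUP y\<in>A. ennreal (d' x y))"

definition setdist2 :: "('x \<Rightarrow> 'x \<Rightarrow> real) \<Rightarrow> 'x set \<Rightarrow> 'x set \<Rightarrow> ennreal" where
  "setdist2 d' A B = (INF x\<in>A. INF y\<in>B. ennreal (d' x y))"

definition tube :: "('z \<Rightarrow> 'a \<Rightarrow> 'x::metric_space set) \<Rightarrow> real \<Rightarrow> 'z \<Rightarrow> 'a \<Rightarrow> 'x set" where
  "tube I \<delta> u a = {x. infdist x (I u a) \<le> \<delta>}"

definition btube :: "('z \<Rightarrow> 'a \<Rightarrow> 'x::metric_space set) \<Rightarrow> real \<Rightarrow> real \<Rightarrow> 'z \<Rightarrow> 'a \<Rightarrow> 'x set" where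
  "btube It W \<delta> u a = {x. infdist x (It u a) \<le> W * \<delta>}"

definition base_setting ::
  "'x::polish_space measure \<Rightarrow> real \<Rightarrow> real \<Rightarrow> ('x \<Rightarrow> 'x \<Rightarrow> real) \<Rightarrow>
   'z::metric_space set \<Rightarrow> 'z measure \<Rightarrow> real \<Rightarrow> real \<Rightarrow> real \<Rightarrow> bool" where
  "base_setting \<mu> Q C0 d' Y \<nu> S c0t C0t \<longleftrightarrow>
     sets \<mu> = sets borel \<and> Q > 1/2 \<and> C0 > 0 \<and>
     (\<forall>x r. 0 < r \<and> (\<exists>y z::'x. r < dist y z) \<longrightarrow> emeasure \<mu> (cball x r) \<le> ennreal (C0 * r powr Q)) \<and>
     Metric_space UNIV d' \<and> separable_space (Metric_space.mtopology UNIV d') \<and>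
     compact Y \<and> sets \<nu> = sets borel \<and> 0 < emeasure \<nu> Y \<and> emeasure \<nu> Y \<le> 1 \<and>
     1 \<le> S \<and> S < 2 * Q \<and> 0 < c0t \<and> c0t \<le> C0t \<and>
     (\<forall>u\<in>Y. \<forall>r. 0 < r \<and> (\<exists>v\<in>Y. \<exists>w\<in>Y. r < dist v w) \<longrightarrow>
        ennreal (c0t * r powr S) \<le> emeasure \<nu> (cball u r) \<and>
        emeasure \<nu> (cball u r) \<le> ennreal (C0t * r powr S))"

definition doubling_prob_on :: "'x::metric_space measure \<Rightarrow> 'x set \<Rightarrow> bool" where
  "doubling_prob_on m F \<longleftrightarrow> sets m = sets borel \<and> emeasure m (space m) = 1 \<and>
     (\<exists>N\<in>null_sets m. UNIV - F \<subseteq> N) \<and>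
     (\<exists>D. \<forall>x\<in>F. \<forall>r>0. emeasure m (cball x (2 * r)) \<le> ennreal D * emeasure m (cball x r))"

definition family_setting ::
  "('x \<Rightarrow> 'x \<Rightarrow> real) \<Rightarrow> 'z set \<Rightarrow> 'a set \<Rightarrow> ('z \<Rightarrow> 'a \<Rightarrow> 'x::metric_space set) \<Rightarrow>
   ('z \<Rightarrow> 'a \<Rightarrow> 'x set) \<Rightarrow> ('z \<Rightarrow> 'a \<Rightarrow> 'x set) \<Rightarrow> ('z \<Rightarrow> 'a \<Rightarrow> 'x measure) \<Rightarrow>
   real \<Rightarrow> real \<Rightarrow> real \<Rightarrow> bool" where
  "family_setting d' Y A F I It mu c c' cb \<longleftrightarrow> 0 < c \<and> c \<le> c' \<and>
     (\<forall>a\<in>A. \<forall>u\<in>Y. F u a \<subseteq> I u a \<and> I u a \<subseteq> It u a \<and>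
        ennreal c \<le> diam2 d' (I u a) \<and> diam2 d' (I u a) \<le> ennreal c' \<and>
        diam2 d' (It u a) \<le> ennreal cb * diam2 d' (I u a) \<and>
        doubling_prob_on (mu u a) (F u a))"

definition axiom_A1 ::
  "'x::metric_space measure \<Rightarrow> real \<Rightarrow> ('x \<Rightarrow> 'x \<Rightarrow> real) \<Rightarrow> 'z::metric_space set \<Rightarrow> 'a set \<Rightarrow>
   ('z \<Rightarrow> 'a \<Rightarrow> 'x set) \<Rightarrow> ('z \<Rightarrow> 'a \<Rightarrow> 'x set) \<Rightarrow> real \<Rightarrow> real \<Rightarrow> real \<Rightarrow> bool" where
  "axiom_A1 \<mu> Q d' Y A I It W S Tx \<longleftrightarrow>
     S / 2 < Tx \<and> Tx < Q \<and>
     (\<exists>c1 c2. 0 < c1 \<and> c1 \<le> c2 \<and>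
       (\<forall>a\<in>A. \<forall>\<delta>. 0 < \<delta> \<and> \<delta> < 1 \<longrightarrow>
          continuous_on Y (\<lambda>u. measure \<mu> (tube I \<delta> u a)) \<and>
          (\<forall>u\<in>Y. ennreal (c1 * \<delta> powr Tx) \<le> emeasure \<mu> (tube I \<delta> u a) \<and>
                  emeasure \<mu> (tube I \<delta> u a) \<le> emeasure \<mu> (btube It W \<delta> u a) \<and>
                  emeasure \<mu> (btube It W \<delta> u a) \<le> ennreal (c2 * \<delta> powr Tx) \<and>
                  (\<forall>B. B \<subseteq> btube It W \<delta> u a \<longrightarrow>
                     emeasure \<mu> B \<le> ennreal c2 * diam2 d' B * ennreal (\<delta> powr Tx)))))"

definition axiom_A2 ::
  "'x::metric_space measure \<Rightarrow> real \<Rightarrow> 'z set \<Rightarrow> 'a set \<Rightarrow> ('z \<Rightarrow> 'a \<Rightarrow> 'x set) \<Rightarrow>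
   ('z \<Rightarrow> 'a \<Rightarrow> 'x set) \<Rightarrow> ('z \<Rightarrow> 'a \<Rightarrow> 'x measure) \<Rightarrow> real \<Rightarrow> real \<Rightarrow> real \<Rightarrow> bool" where
  "axiom_A2 \<mu> Q Y A F I mu S Tx \<theta> \<longleftrightarrow>
     0 \<le> \<theta> \<and> \<theta> < (2 * Q - 2 * Tx + S) / (S + 2) \<and>
     (\<exists>K' K. K' > 0 \<and> K \<ge> 1 \<and>
       (\<forall>a\<in>A. \<forall>u\<in>Y. \<forall>x\<in>F u a. \<forall>\<delta> r. 0 < \<delta> \<and> \<delta> < 1 \<and> \<delta> \<le> r \<and> r \<le> 2 * \<delta> \<longrightarrow>
          emeasure (mu u a) (cball x r) > 0 \<longrightarrow>
          emeasure \<mu> (tube I \<delta> u a \<inter> cball x (K * r)) \<ge>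
            ennreal K' * emeasure (mu u a) (cball x r) * ennreal (\<delta> powr \<theta>)
              * emeasure \<mu> (tube I \<delta> u a)))"

definition axiom_A3 ::
  "('x \<Rightarrow> 'x \<Rightarrow> real) \<Rightarrow> 'z::metric_space set \<Rightarrow> 'a set \<Rightarrow> ('z \<Rightarrow> 'a \<Rightarrow> 'x::metric_space set) \<Rightarrow>
   real \<Rightarrow> bool" where
  "axiom_A3 d' Y A It W \<longleftrightarrow>
     (\<exists>b>0. \<forall>a\<in>A. \<forall>a'\<in>A. \<forall>u\<in>Y. \<forall>v\<in>Y. \<forall>\<delta>. 0 < \<delta> \<and> \<delta> < 1 \<and> u \<noteq> v \<longrightarrow>
        diam2 d' (btube It W \<delta> u a \<inter> btube It W \<delta> v a') \<le> ennreal (b * \<delta> / dist u v))"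

definition axiom_A4 ::
  "'z::metric_space set \<Rightarrow> 'a set \<Rightarrow> ('z \<Rightarrow> 'a \<Rightarrow> 'x::metric_space set) \<Rightarrow>
   ('z \<Rightarrow> 'a \<Rightarrow> 'x set) \<Rightarrow> real \<Rightarrow> bool" where
  "axiom_A4 Y A I It W \<longleftrightarrow> 0 < W \<and>
     (\<exists>Nbar::nat. \<forall>a\<in>A. \<forall>u\<in>Y. \<forall>v\<in>Y. \<forall>\<delta>. 0 < \<delta> \<and> \<delta> < 1 \<and> dist u v \<le> \<delta> \<longrightarrow>
        (\<exists>B. B \<subseteq> A \<and> finite B \<and> card B \<le> Nbar \<and>
             tube I \<delta> u a \<subseteq> (\<Union>b\<in>B. btube It W \<delta> v b)))"

definition axiom_A5 ::
  "real \<Rightarrow> ('x \<Rightarrow> 'x \<Rightarrow> real) \<Rightarrow> 'z::metric_space set \<Rightarrow> 'a set \<Rightarrow>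
   ('z \<Rightarrow> 'a \<Rightarrow> 'x::metric_space set) \<Rightarrow> real \<Rightarrow> real \<Rightarrow> real \<Rightarrow> real \<Rightarrow> real \<Rightarrow> real \<Rightarrow> bool" where
  "axiom_A5 Q d' Y A It W S Tx \<theta> \<alpha> lam \<longleftrightarrow>
     0 \<le> \<alpha> \<and> \<alpha> \<le> S - 1 \<and> (\<theta> \<noteq> 0 \<longrightarrow> \<alpha> \<le> Q / \<theta> - 2) \<and>
     max (S - \<alpha>) (S - 2 * Tx + 2) \<le> lam \<and>
     lam < 2 * Q - 2 * Tx + S + 2 - 2 * \<theta> * (\<alpha> + 2) \<and>
     (\<exists>C'>0. \<forall>\<delta> \<beta> \<gamma> (N::nat) (us::nat \<Rightarrow> 'z) (as::nat \<Rightarrow> 'a) u a.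
        0 < \<delta> \<and> \<delta> < 1 \<and> 0 < \<beta> \<and> \<beta> < 1 \<and> 0 < \<gamma> \<and> \<gamma> < 1 \<and>
        (\<forall>j<N. us j \<in> Y \<and> as j \<in> A) \<and> u \<in> Y \<and> a \<in> A \<and>
        (\<forall>j<N. \<forall>k<N. j \<noteq> k \<longrightarrow> dist (us j) (us k) > \<delta>) \<and>
        (\<forall>j<N. btube It W \<delta> u a \<inter> btube It W \<delta> (us j) (as j) \<noteq> {} \<and>
                dist (us j) u \<ge> \<beta> / 8) \<longrightarrow>
        (\<forall>j<N. real (card {i. i < N \<and> dist (us i) (us j) \<le> \<beta> \<and>
              btube It W \<delta> (us i) (as i) \<inter> btube It W \<delta> (us j) (as j) \<noteq> {} \<and>
              setdist2 d' (btube It W \<delta> (us i) (as i) \<inter> btube It W \<delta> (us j) (as j))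
                          (btube It W \<delta> (us j) (as j) \<inter> btube It W \<delta> u a) \<ge> ennreal \<gamma>})
           \<le> C' * \<delta> powr (- lam) * \<beta> * \<gamma> powr (- \<alpha>)))"

definition hairbrush ::
  "'z::metric_space set \<Rightarrow> 'a set \<Rightarrow> ('z \<Rightarrow> 'a \<Rightarrow> 'x::metric_space set) \<Rightarrow> real \<Rightarrow>
   nat \<Rightarrow> real \<Rightarrow> (nat \<Rightarrow> 'z) \<Rightarrow> (nat \<Rightarrow> 'a) \<Rightarrow> bool" where
  "hairbrush Y A It W N \<delta> us as \<longleftrightarrow>
     0 < \<delta> \<and> \<delta> < 1 \<and> (\<forall>j<N. us j \<in> Y \<and> as j \<in> A) \<and>
     (\<forall>j<N. \<forall>k<N. j \<noteq> k \<longrightarrow> dist (us j) (us k) > \<delta>) \<and>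
     (\<exists>u\<in>Y. \<exists>a\<in>A. \<forall>j<N. btube It W \<delta> u a \<inter> btube It W \<delta> (us j) (as j) \<noteq> {})"

end

theory Submission
  imports Defs
begin

text \<open>Write \<open>q = p - 1 \<in> [1/(\<alpha>+1), 1]\<close>, so that the integral of \<open>(\<Sum>j. \<chi>(T j))^p\<close> is the sum over \<open>j\<close>
  of the integrals of \<open>(\<Sum>i. \<chi>(T i))^q\<close> over \<open>T j\<close>.
  The directions of the hairbrush are split into \<open>O(log (1/\<delta>))\<close> clusters (dyadic shells around the
  core direction and pieces of a fixed net); the power-mean inequality recombines them at the cost
  of a polylogarithmic factor, which is absorbed into \<open>\<delta> powr -\<epsilon>\<close>.
  Inside a cluster, the tubes crossing a fixed \<open>T j\<close> are grouped by the dyadic angle \<open>\<beta>\<close> and by the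
  dyadic \<open>d'\<close>-distance \<open>\<gamma>\<close> of \<open>T i \<inter> T j\<close> from the core piece \<open>T j \<inter> T\<close>. On each group \<open>G\<close>, Jensen's
  inequality for \<open>x powr q\<close> bounds the contribution by \<open>|U| powr (1-q) * (#G * \<delta>/\<beta> * \<delta> powr T) powr q\<close>,
  where \<open>U = T j \<inter> \<Union>G\<close> has \<open>d'\<close>-diameter \<open>O(\<gamma> + \<delta>/\<beta>)\<close> by (A3), hence small measure by (A1), and
  \<open>#G\<close> is bounded by (A5) when \<open>\<gamma> \<ge> \<delta>/\<beta>\<close> and by the Ahlfors regularity of \<open>\<nu>\<close> otherwise. Both
  cases give \<open>\<delta> powr T * \<delta> powr (1 - q (\<lambda> + \<alpha>))\<close> per tube, because \<open>q (1 + \<alpha>) \<ge> 1\<close>.\<close>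

lemma powr_le_tangent:
  fixes x t q :: real
  assumes "x \<ge> 0" "t > 0" "0 < q" "q \<le> 1"
  shows "x powr q \<le> q * t powr (q - 1) * x + (1 - q) * t powr q"
proof (cases "x = 0")
  case True
  then show ?thesis using assms by simp
next
  case False
  then have x: "x > 0" using assms by simp
  have "(x/t) powr q * 1 powr (1-q) \<le> q * (x/t) + (1-q) * 1"
    using Youngs_inequality_0[of q "1-q" "x/t" 1] assms x by simp
  then have "t powr q * (x/t) powr q \<le> t powr q * (q * (x/t) + (1-q))"
    using assms by (intro mult_left_mono) auto
  moreover have "t powr q * (x/t) powr q = x powr q"
    using assms x by (simp add: powr_divide)
  moreover have "t powr q * (q * (x/t) + (1-q)) = q * t powr (q-1) * x + (1-q) * t powr q"
    using assms by (simp add: powr_diff field_simps)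
  ultimately show ?thesis by simp
qed

text \<open>Jensen's inequality for the concave map \<open>x \<mapsto> x powr q\<close>, on a set of measure at most \<open>B\<close>:
  integrate the tangent line of \<open>powr_le_tangent\<close> taken at the mean value \<open>A / B\<close>.\<close>

lemma nn_integral_powr_le_concave:
  fixes M :: "'b measure"
  assumes g: "g \<in> borel_measurable M" "\<And>x. g x \<ge> 0"
    and U: "U \<in> sets M" "\<And>x. x \<notin> U \<Longrightarrow> g x = 0"
    and int_g: "(\<integral>\<^sup>+x. ennreal (g x) \<partial>M) \<le> ennreal A" and meas_U: "emeasure M U \<le> ennreal B"
    and AB: "A > 0" "B > 0" and q: "0 < q" "q \<le> 1"
  shows "(\<integral>\<^sup>+x. ennreal (g x powr q) \<partial>M) \<le> ennreal (B powr (1-q) * A powr q)"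
proof -
  define t where "t = A / B"
  have t: "t > 0" using AB by (simp add: t_def)
  define c1 where "c1 = q * t powr (q-1)"
  define c2 where "c2 = (1-q) * t powr q"
  have c: "c1 \<ge> 0" "c2 \<ge> 0" using q t by (auto simp: c1_def c2_def)
  have pointwise: "ennreal (g x powr q) \<le> ennreal c1 * ennreal (g x) + ennreal c2 * indicator U x" for x
  proof (cases "x \<in> U")
    case True
    have "g x powr q \<le> c1 * g x + c2"
      using powr_le_tangent[OF g(2) t q] by (simp add: c1_def c2_def)
    then show ?thesis using True c g(2)[of x]
      by (simp add: ennreal_mult[symmetric] ennreal_plus[symmetric] del: ennreal_plus)
  next
    case False
    then show ?thesis using U(2)[of x] q by simp
  qed
  have "(\<integral>\<^sup>+x. ennreal (g x powr q) \<partial>M)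
      \<le> (\<integral>\<^sup>+x. ennreal c1 * ennreal (g x) + ennreal c2 * indicator U x \<partial>M)"
    by (intro nn_integral_mono pointwise)
  also have "\<dots> = ennreal c1 * (\<integral>\<^sup>+x. ennreal (g x) \<partial>M) + ennreal c2 * emeasure M U"
    using g U by (simp add: nn_integral_add nn_integral_cmult)
  also have "\<dots> \<le> ennreal c1 * ennreal A + ennreal c2 * ennreal B"
    by (intro add_mono mult_left_mono int_g meas_U) auto
  also have "\<dots> = ennreal (c1 * A + c2 * B)"
    using c AB by (simp add: ennreal_mult[symmetric] ennreal_plus[symmetric] del: ennreal_plus)
  also have "c1 * A + c2 * B = B powr (1-q) * A powr q"
  proof -
    have "c1 * A = q * (A powr q * B powr (1-q))"
      using AB q by (simp add: c1_def t_def powr_divide powr_diff field_simps)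
    moreover have "c2 * B = (1-q) * (A powr q * B powr (1-q))"
      using AB q by (simp add: c2_def t_def powr_divide powr_diff field_simps)
    ultimately show ?thesis by (simp add: algebra_simps)
  qed
  finally show ?thesis .
qed

lemma powr_sum_le_sum_powr:
  fixes x :: "'i \<Rightarrow> real"
  assumes I: "finite I" and x: "\<And>k. x k \<ge> 0" and q: "0 < q" "q \<le> 1"
  shows "(sum x I) powr q \<le> (\<Sum>k\<in>I. x k powr q)"
proof (cases "sum x I = 0")
  case True
  then show ?thesis using x by (simp add: sum_nonneg)
next
  case False
  define s where "s = sum x I"
  have s: "s > 0" using False x by (simp add: s_def sum_nonneg order_less_le)
  have summand: "s powr q * (x k / s) \<le> x k powr q" if "k \<in> I" for k
  proof (cases "x k = 0")
    case True
    then show ?thesis by simp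
  next
    case False
    then have xk: "x k > 0" using x order_less_le by metis
    have "x k \<le> s" unfolding s_def using that I x by (intro member_le_sum) auto
    then have "x k / s \<le> 1" using s by simp
    then have "(x k / s) powr 1 \<le> (x k / s) powr q" using xk s q by (intro powr_mono') auto
    then have "s powr q * (x k / s) \<le> s powr q * (x k / s) powr q"
      using xk s by (intro mult_left_mono) auto
    also have "\<dots> = x k powr q" using xk s by (simp add: powr_divide)
    finally show ?thesis .
  qed
  have "s powr q = (\<Sum>k\<in>I. s powr q * (x k / s))"
    using s by (simp add: s_def sum_divide_distrib[symmetric] sum_distrib_left[symmetric])
  also have "\<dots> \<le> (\<Sum>k\<in>I. x k powr q)" using summand by (intro sum_mono) auto
  finally show ?thesis by (simp add: s_def)
qed

lemma powr_add_le_add_powr: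
  fixes a b q :: real
  assumes "a \<ge> 0" "b \<ge> 0" "0 < q" "q \<le> 1"
  shows "(a + b) powr q \<le> a powr q + b powr q"
  using powr_sum_le_sum_powr[of "{True, False}" "\<lambda>t. if t then a else b" q] assms by auto

lemma sum_powr_le_card_powr:
  fixes v :: "'c \<Rightarrow> real"
  assumes I: "finite I" and v: "\<And>c. v c \<ge> 0" and p: "p \<ge> 1"
  shows "(\<Sum>c\<in>I. v c) powr p \<le> real (card I) powr p * (\<Sum>c\<in>I. v c powr p)"
proof (cases "I = {}")
  case True
  then show ?thesis by simp
next
  case False
  define m where "m = Max (v ` I)"
  have "m \<in> v ` I" unfolding m_def using I False by (intro Max_in) auto
  then obtain c0 where c0: "c0 \<in> I" "m = v c0" by blast
  have "(\<Sum>c\<in>I. v c) \<le> real (card I) * m"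
    using sum_bounded_above[of I v m] I by (simp add: m_def)
  then have "(\<Sum>c\<in>I. v c) powr p \<le> (real (card I) * m) powr p"
    using v p by (intro powr_mono2) (auto intro: sum_nonneg)
  also have "\<dots> = real (card I) powr p * m powr p" using v c0 by (simp add: powr_mult)
  also have "\<dots> \<le> real (card I) powr p * (\<Sum>c\<in>I. v c powr p)"
    unfolding c0(2) using I c0(1) by (intro mult_left_mono member_le_sum) auto
  finally show ?thesis .
qed

lemma sum_UN_le_sum_sum:
  fixes f :: "'i \<Rightarrow> real"
  assumes "finite I" "\<And>k. k \<in> I \<Longrightarrow> finite (G k)" "\<And>i. f i \<ge> 0"
  shows "sum f (\<Union>k\<in>I. G k) \<le> (\<Sum>k\<in>I. sum f (G k))"
  using assms
proof (induction I rule: finite_induct)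
  case empty
  then show ?case by simp
next
  case (insert k I)
  have fin: "finite (\<Union>k\<in>I. G k)" "finite (G k)" using insert by auto
  have "sum f (G k \<union> (\<Union>k\<in>I. G k)) \<le> sum f (G k) + sum f (\<Union>k\<in>I. G k)"
    using sum.union_inter[OF fin(2) fin(1), of f] sum_nonneg[of "G k \<inter> (\<Union>k\<in>I. G k)" f]
      insert.prems(2) by fastforce
  then show ?case using insert by simp
qed

lemma sum_le_sum_of_cover:
  fixes f :: "'i \<Rightarrow> real"
  assumes H: "finite H" and I: "finite I" and G: "\<And>k. k \<in> I \<Longrightarrow> finite (G k)"
    and f: "\<And>i. f i \<ge> 0" and cover: "\<And>i. i \<in> H \<Longrightarrow> f i \<noteq> 0 \<Longrightarrow> \<exists>k\<in>I. i \<in> G k"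
  shows "sum f H \<le> (\<Sum>k\<in>I. sum f (G k))"
proof -
  have "sum f H = sum f {i\<in>H. f i \<noteq> 0}"
    using H by (intro sum.mono_neutral_right) auto
  also have "\<dots> \<le> sum f (\<Union>k\<in>I. G k)"
    using cover I G f by (intro sum_mono2) auto
  also have "\<dots> \<le> (\<Sum>k\<in>I. sum f (G k))" by (rule sum_UN_le_sum_sum[OF I G f])
  finally show ?thesis .
qed

lemma ex_dyadic_shell:
  fixes R x :: real
  assumes "0 < R" "x \<le> R" "R / 2^(M+1) < x"
  shows "\<exists>k\<le>M. R / 2^k / 2 < x \<and> x \<le> R / 2^k"
  using assms(3)
proof (induction M)
  case 0
  then show ?case using assms by auto
next
  case (Suc M)
  show ?case
  proof (cases "R / 2^(M+1) < x")
    case True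
    then show ?thesis using Suc by (meson le_SucI)
  next
    case False
    then have "x \<le> R / 2^(Suc M)" by simp
    moreover have "R / 2^(Suc M) / 2 < x" using Suc.prems by (simp add: field_simps)
    ultimately show ?thesis by blast
  qed
qed

lemma ex_dyadic_shell_ennreal:
  fixes \<gamma> :: ennreal
  assumes "M \<ge> 1" "ennreal (1/2^M) \<le> \<gamma>"
  shows "\<exists>m. 1 \<le> m \<and> m \<le> M \<and> ennreal (1/2^m) \<le> \<gamma> \<and> (m = 1 \<or> \<gamma> < ennreal (2 * (1/2^m)))"
  using assms
proof (induction M)
  case 0
  then show ?case by simp
next
  case (Suc M)
  show ?case
  proof (cases "M \<ge> 1 \<and> ennreal (1/2^M) \<le> \<gamma>")
    case True
    then show ?thesis using Suc.IH le_SucI by blast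
  next
    case False
    show ?thesis
    proof (cases "M = 0")
      case True
      then show ?thesis using Suc.prems(2) by auto
    next
      case False': False
      then have "\<gamma> < ennreal (1/2^M)" using False by (simp add: not_le)
      moreover have "1/2^M = 2 * (1/2^(Suc M) :: real)" by simp
      ultimately show ?thesis using Suc.prems(2) by (metis le_add1 plus_1_eq_Suc order.refl)
    qed
  qed
qed

lemma ln_inverse_le_powr:
  fixes \<delta> \<epsilon> :: real
  assumes "0 < \<delta>" "\<epsilon> > 0"
  shows "ln (1/\<delta>) \<le> (1/\<epsilon>) * \<delta> powr (-\<epsilon>)"
proof -
  have "\<epsilon> * ln (1/\<delta>) = ln (\<delta> powr (-\<epsilon>))" using assms by (simp add: ln_powr ln_div)
  also have "\<dots> \<le> \<delta> powr (-\<epsilon>)" using ln_le_minus_one[of "\<delta> powr (-\<epsilon>)"] assms by simp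
  finally show ?thesis using assms by (simp add: field_simps)
qed

lemma affine_ln_power_le_powr:
  fixes \<delta> \<epsilon> a b :: real and n :: nat
  assumes \<delta>: "0 < \<delta>" "\<delta> < 1" and \<epsilon>: "\<epsilon> > 0" and ab: "a \<ge> 0" "b \<ge> 0" and n: "n > 0"
  shows "(a + b * ln (1/\<delta>)) ^ n \<le> (a + b * (n/\<epsilon>)) ^ n * \<delta> powr (-\<epsilon>)"
proof -
  define y where "y = \<delta> powr (-\<epsilon>/n)"
  have y: "y \<ge> 1" unfolding y_def using \<delta> \<epsilon> n powr_mono'[of "-\<epsilon>/n" 0 \<delta>] by simp
  have "ln (1/\<delta>) \<le> (n/\<epsilon>) * y"
    using ln_inverse_le_powr[OF \<delta>(1), of "\<epsilon>/n"] \<epsilon> n by (simp add: y_def)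
  then have "a + b * ln (1/\<delta>) \<le> a + b * ((n/\<epsilon>) * y)"
    using ab by (intro add_left_mono mult_left_mono) auto
  also have "\<dots> \<le> (a + b * (n/\<epsilon>)) * y"
    using mult_left_mono[OF y ab(1)] by (simp add: algebra_simps)
  finally have "(a + b * ln (1/\<delta>)) ^ n \<le> ((a + b * (n/\<epsilon>)) * y) ^ n"
    using ab \<delta> by (intro power_mono) auto
  also have "\<dots> = (a + b * (n/\<epsilon>)) ^ n * \<delta> powr (-\<epsilon>)"
    using \<delta> n by (simp add: power_mult_distrib y_def powr_realpow[symmetric] powr_powr)
  finally show ?thesis .
qed

lemma ex_dyadic_scale:
  fixes \<delta> :: real
  assumes "0 < \<delta>" "\<delta> < 1"
  obtains M :: nat where "1/2^M \<le> \<delta>" "M \<ge> 1" "real M \<le> ln (1/\<delta>) / ln 2 + 2"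
proof
  define M where "M = nat \<lceil>log 2 (1/\<delta>)\<rceil> + 1"
  have pos: "log 2 (1/\<delta>) > 0" using assms by simp
  have "1/\<delta> = 2 powr (log 2 (1/\<delta>))" using assms by simp
  also have "\<dots> \<le> 2 powr (real M)" unfolding M_def using pos by (intro powr_mono) linarith+
  finally show "1/2^M \<le> \<delta>" using assms by (simp add: powr_realpow field_simps)
  show "M \<ge> 1" unfolding M_def by simp
  show "real M \<le> ln (1/\<delta>) / ln 2 + 2" unfolding M_def using pos by (simp add: log_def) linarith
qed

lemma powr_interpolation_le_wide:
  fixes K1 K2 g \<delta> q \<alpha> lam Tx :: real
  assumes K: "K1 > 0" "K2 > 0" and \<delta>: "0 < \<delta>" "\<delta> \<le> g"
    and q: "0 < q" "q \<le> 1" "q * (1 + \<alpha>) \<ge> 1"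
  shows "(K1 * g * \<delta> powr Tx) powr (1-q) * (K2 * \<delta> powr (-lam) * g powr (-\<alpha>) * \<delta> * \<delta> powr Tx) powr q
     \<le> K1 powr (1-q) * K2 powr q * \<delta> powr Tx * \<delta> powr (1 - q * (lam + \<alpha>))"
proof -
  have g: "g > 0" using \<delta> by linarith
  have "ln \<delta> \<le> ln g" using \<delta> g by simp
  moreover have "1 - q - q * \<alpha> \<le> 0" using q by (simp add: algebra_simps)
  ultimately have gap: "(1 - q - q * \<alpha>) * (ln g - ln \<delta>) \<le> 0"
    by (intro mult_nonpos_nonneg) auto
  have L: "(K1 * g * \<delta> powr Tx) powr (1-q) * (K2 * \<delta> powr (-lam) * g powr (-\<alpha>) * \<delta> * \<delta> powr Tx) powr q
     = exp ((1-q) * (ln K1 + ln g + Tx * ln \<delta>) + q * (ln K2 - lam * ln \<delta> - \<alpha> * ln g + ln \<delta> + Tx * ln \<delta>))"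
    using K \<delta> g by (simp add: powr_def ln_mult exp_add)
  have R: "K1 powr (1-q) * K2 powr q * \<delta> powr Tx * \<delta> powr (1 - q * (lam + \<alpha>))
     = exp ((1-q) * ln K1 + q * ln K2 + Tx * ln \<delta> + (1 - q * (lam + \<alpha>)) * ln \<delta>)"
    using K \<delta> by (simp add: powr_def exp_add)
  have "(1-q) * (ln K1 + ln g + Tx * ln \<delta>) + q * (ln K2 - lam * ln \<delta> - \<alpha> * ln g + ln \<delta> + Tx * ln \<delta>)
      = (1-q) * ln K1 + q * ln K2 + Tx * ln \<delta> + (1 - q * (lam + \<alpha>)) * ln \<delta>
        + (1 - q - q * \<alpha>) * (ln g - ln \<delta>)"
    by (simp add: algebra_simps)
  then show ?thesis unfolding L R using gap by simp
qed

lemma powr_interpolation_le_narrow: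
  fixes K1 K3 \<beta> \<delta> q S lam \<alpha> Tx :: real
  assumes K: "K1 > 0" "K3 > 0" and \<delta>: "0 < \<delta>" "\<delta> \<le> \<beta>" "\<beta> \<le> 1"
    and q: "0 < q" "q \<le> 1" "q * S \<ge> 1" and S: "S \<le> lam + \<alpha>"
  shows "(K1 * (\<delta>/\<beta>) * \<delta> powr Tx) powr (1-q) * (K3 * (\<beta>/\<delta>) powr S * (\<delta>/\<beta>) * \<delta> powr Tx) powr q
     \<le> K1 powr (1-q) * K3 powr q * \<delta> powr Tx * \<delta> powr (1 - q * (lam + \<alpha>))"
proof -
  have \<beta>: "\<beta> > 0" using \<delta> by linarith
  have gap1: "(q * S - 1) * ln \<beta> \<le> 0" using q \<beta> \<delta> by (intro mult_nonneg_nonpos) auto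
  have gap2: "(q * (lam + \<alpha>) - q * S) * ln \<delta> \<le> 0" using q \<delta> S by (intro mult_nonneg_nonpos) auto
  have L: "(K1 * (\<delta>/\<beta>) * \<delta> powr Tx) powr (1-q) * (K3 * (\<beta>/\<delta>) powr S * (\<delta>/\<beta>) * \<delta> powr Tx) powr q
     = exp ((1-q) * (ln K1 + ln \<delta> - ln \<beta> + Tx * ln \<delta>)
            + q * (ln K3 + S * (ln \<beta> - ln \<delta>) + ln \<delta> - ln \<beta> + Tx * ln \<delta>))"
    using K \<delta> \<beta> by (simp add: powr_def ln_mult ln_div flip: exp_add, simp add: algebra_simps)
  have R: "K1 powr (1-q) * K3 powr q * \<delta> powr Tx * \<delta> powr (1 - q * (lam + \<alpha>))
     = exp ((1-q) * ln K1 + q * ln K3 + Tx * ln \<delta> + (1 - q * (lam + \<alpha>)) * ln \<delta>)"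
    using K \<delta> by (simp add: powr_def exp_add)
  have "(1-q) * (ln K1 + ln \<delta> - ln \<beta> + Tx * ln \<delta>)
          + q * (ln K3 + S * (ln \<beta> - ln \<delta>) + ln \<delta> - ln \<beta> + Tx * ln \<delta>)
      = (1-q) * ln K1 + q * ln K3 + Tx * ln \<delta> + (1 - q * (lam + \<alpha>)) * ln \<delta>
        + (q * S - 1) * ln \<beta> + (q * (lam + \<alpha>) - q * S) * ln \<delta>"
    by (simp add: algebra_simps)
  then show ?thesis unfolding L R using gap1 gap2 by simp
qed

lemma diam2_le:
  assumes "\<And>x y. x \<in> B \<Longrightarrow> y \<in> B \<Longrightarrow> d' x y \<le> r"
  shows "diam2 d' B \<le> ennreal r"
  unfolding diam2_def using assms by (intro SUP_least) (simp add: ennreal_leI)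

lemma le_of_diam2_le:
  assumes "x \<in> B" "y \<in> B" "diam2 d' B \<le> ennreal r" "r \<ge> 0"
  shows "d' x y \<le> r"
proof -
  have "ennreal (d' x y) \<le> diam2 d' B"
    unfolding diam2_def using assms(1,2) by (intro SUP_upper2[of x] SUP_upper2[of y]) auto
  then have "ennreal (d' x y) \<le> ennreal r" using assms(3) by (rule order_trans)
  then show ?thesis using assms(4) by (simp add: ennreal_le_iff)
qed

lemma setdist2_less_imp:
  assumes "setdist2 d' P Q < ennreal g"
  shows "\<exists>x\<in>P. \<exists>y\<in>Q. d' x y < g"
proof -
  obtain x y where xy: "x \<in> P" "y \<in> Q" "ennreal (d' x y) < ennreal g"
    using assms unfolding setdist2_def by (auto simp: INF_less_iff)
  moreover have "0 < g"
    using xy(3) by (metis ennreal_eq_0_iff ennreal_less_zero_iff not_less_zero not_less)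
  ultimately have "d' x y < g" by (cases "0 \<le> d' x y") (auto simp: ennreal_less_iff)
  then show ?thesis using xy by blast
qed

lemma closed_btube: "closed (btube It W \<delta> u a)"
  unfolding btube_def by (intro closed_Collect_le continuous_on_infdist) (auto intro: continuous_intros)

lemma card_separated_le_card_net:
  fixes us :: "nat \<Rightarrow> 'z::metric_space"
  assumes F: "finite F" "Y \<subseteq> (\<Union>y\<in>F. ball y r)" and r: "2 * r \<le> \<delta>"
    and us: "\<forall>j<N. us j \<in> Y" and sep: "\<forall>j<N. \<forall>k<N. j \<noteq> k \<longrightarrow> dist (us j) (us k) > \<delta>"
  shows "N \<le> card F"
proof -
  have "\<forall>j. \<exists>y. j < N \<longrightarrow> y \<in> F \<and> us j \<in> ball y r" using us F by blast
  then obtain c where c: "\<forall>j<N. c j \<in> F \<and> us j \<in> ball (c j) r" by metis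
  have "inj_on c {..<N}"
  proof (rule inj_onI, rule ccontr)
    fix j k assume jk: "j \<in> {..<N}" "k \<in> {..<N}" "c j = c k" "j \<noteq> k"
    then have "dist (c j) (us j) < r" "dist (c j) (us k) < r" using c by auto
    then have "dist (us j) (us k) < 2 * r"
      using dist_triangle[of "us j" "us k" "c j"] dist_commute[of "c j" "us j"] by linarith
    then show False using sep jk r by fastforce
  qed
  moreover have "c ` {..<N} \<subseteq> F" using c by auto
  ultimately show ?thesis using card_inj_on_le[OF _ _ F(1), of c "{..<N}"] by simp
qed

lemma sum_const_ennreal: "K \<ge> 0 \<Longrightarrow> (\<Sum>i\<in>G. ennreal K) = ennreal (real (card G) * K)"
  by (simp add: ennreal_mult ennreal_of_nat_eq_real_of_nat)

text \<open>The part of the setting the estimate uses: the constants \<open>c2\<close> of (A1), \<open>b\<close> of (A3) and \<open>C'\<close>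
  of (A5), and the exponent \<open>q = p - 1\<close>.\<close>

locale hairbrush_setting =
  fixes \<mu> :: "'x::polish_space measure" and d' :: "'x \<Rightarrow> 'x \<Rightarrow> real"
    and Y :: "'z::metric_space set" and \<nu> :: "'z measure" and A :: "'a set"
    and It :: "'z \<Rightarrow> 'a \<Rightarrow> 'x set"
    and W S Tx \<alpha> lam c2 b C' c0t C0t q :: real
  assumes sets_\<mu>: "sets \<mu> = sets borel" and metric_d': "Metric_space UNIV d'"
    and compact_Y: "compact Y" and sets_\<nu>: "sets \<nu> = sets borel"
    and c2_pos: "c2 > 0"
    and A1_btube: "\<forall>a\<in>A. \<forall>\<delta>. 0 < \<delta> \<and> \<delta> < 1 \<longrightarrow> (\<forall>u\<in>Y.
          emeasure \<mu> (btube It W \<delta> u a) \<le> ennreal (c2 * \<delta> powr Tx) \<and>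
          (\<forall>B. B \<subseteq> btube It W \<delta> u a \<longrightarrow>
                     emeasure \<mu> B \<le> ennreal c2 * diam2 d' B * ennreal (\<delta> powr Tx)))"
    and b_pos: "b > 0"
    and A3: "\<forall>a\<in>A. \<forall>a'\<in>A. \<forall>u\<in>Y. \<forall>v\<in>Y. \<forall>\<delta>. 0 < \<delta> \<and> \<delta> < 1 \<and> u \<noteq> v \<longrightarrow>
        diam2 d' (btube It W \<delta> u a \<inter> btube It W \<delta> v a') \<le> ennreal (b * \<delta> / dist u v)"
    and C'_pos: "C' > 0"
    and A5: "\<forall>\<delta> \<beta> \<gamma> (N::nat) (us::nat \<Rightarrow> 'z) (as::nat \<Rightarrow> 'a) u a.
        0 < \<delta> \<and> \<delta> < 1 \<and> 0 < \<beta> \<and> \<beta> < 1 \<and> 0 < \<gamma> \<and> \<gamma> < 1 \<and>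
        (\<forall>j<N. us j \<in> Y \<and> as j \<in> A) \<and> u \<in> Y \<and> a \<in> A \<and>
        (\<forall>j<N. \<forall>k<N. j \<noteq> k \<longrightarrow> dist (us j) (us k) > \<delta>) \<and>
        (\<forall>j<N. btube It W \<delta> u a \<inter> btube It W \<delta> (us j) (as j) \<noteq> {} \<and>
                dist (us j) u \<ge> \<beta> / 8) \<longrightarrow>
        (\<forall>j<N. real (card {i. i < N \<and> dist (us i) (us j) \<le> \<beta> \<and>
              btube It W \<delta> (us i) (as i) \<inter> btube It W \<delta> (us j) (as j) \<noteq> {} \<and>
              setdist2 d' (btube It W \<delta> (us i) (as i) \<inter> btube It W \<delta> (us j) (as j))
                          (btube It W \<delta> (us j) (as j) \<inter> btube It W \<delta> u a) \<ge> ennreal \<gamma>})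
           \<le> C' * \<delta> powr (- lam) * \<beta> * \<gamma> powr (- \<alpha>))"
    and c0t: "0 < c0t" "c0t \<le> C0t"
    and \<nu>_cball: "\<forall>u\<in>Y. \<forall>r. 0 < r \<and> (\<exists>v\<in>Y. \<exists>w\<in>Y. r < dist v w) \<longrightarrow>
        ennreal (c0t * r powr S) \<le> emeasure \<nu> (cball u r) \<and>
        emeasure \<nu> (cball u r) \<le> ennreal (C0t * r powr S)"
    and S: "1 \<le> S" and \<alpha>: "0 \<le> \<alpha>" "\<alpha> \<le> S - 1" and lam: "S - \<alpha> \<le> lam"
    and q: "1 / (\<alpha> + 1) \<le> q" "q \<le> 1"
begin

abbreviation "TB \<equiv> btube It W"

lemma q_pos: "q > 0"
  using q \<alpha> by (smt (verit) divide_pos_pos)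

lemma one_le_q_mul_alpha: "1 \<le> q * (1 + \<alpha>)"
  using q \<alpha> by (simp add: field_simps)

lemma gain_exponent_nonpos: "1 - q * (lam + \<alpha>) \<le> 0"
proof -
  have "q * (1 + \<alpha>) \<le> q * (lam + \<alpha>)" using lam \<alpha> q_pos by (intro mult_left_mono) auto
  then show ?thesis using one_le_q_mul_alpha by linarith
qed

lemma one_le_powr_gain: "0 < \<delta> \<Longrightarrow> \<delta> \<le> 1 \<Longrightarrow> 1 \<le> \<delta> powr (1 - q * (lam + \<alpha>))"
  using powr_mono'[OF gain_exponent_nonpos, of \<delta>] by simp

lemma d'_triangle: "d' x z \<le> d' x y + d' y z"
  using Metric_space.triangle[OF metric_d'] by auto

lemma d'_commute: "d' x y = d' y x"
  using Metric_space.commute[OF metric_d'] by auto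

lemma btube_sets [measurable]: "TB \<delta> u a \<in> sets \<mu>"
  using closed_btube[of It W \<delta> u a] sets_\<mu> by (simp add: borel_closed)

lemma emeasure_btube_le:
  "a \<in> A \<Longrightarrow> u \<in> Y \<Longrightarrow> 0 < \<delta> \<Longrightarrow> \<delta> < 1 \<Longrightarrow> emeasure \<mu> (TB \<delta> u a) \<le> ennreal (c2 * \<delta> powr Tx)"
  using A1_btube by blast

lemma emeasure_subset_btube_le:
  assumes "a \<in> A" "u \<in> Y" "0 < \<delta>" "\<delta> < 1" "B \<subseteq> TB \<delta> u a" "r \<ge> 0" "diam2 d' B \<le> ennreal r"
  shows "emeasure \<mu> B \<le> ennreal (c2 * r * \<delta> powr Tx)"
proof -
  have "emeasure \<mu> B \<le> ennreal c2 * diam2 d' B * ennreal (\<delta> powr Tx)"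
    using assms A1_btube by blast
  also have "\<dots> \<le> ennreal c2 * ennreal r * ennreal (\<delta> powr Tx)"
    using assms by (intro mult_right_mono mult_left_mono) auto
  also have "\<dots> = ennreal (c2 * r * \<delta> powr Tx)"
    using c2_pos assms by (simp add: ennreal_mult)
  finally show ?thesis .
qed

lemma emeasure_btube_inter_le:
  assumes "a \<in> A" "a' \<in> A" "u \<in> Y" "v \<in> Y" "0 < \<delta>" "\<delta> < 1" "u \<noteq> v"
  shows "emeasure \<mu> (TB \<delta> u a \<inter> TB \<delta> v a') \<le> ennreal (c2 * (b * \<delta> / dist u v) * \<delta> powr Tx)"
  using assms A3 b_pos by (intro emeasure_subset_btube_le[of a u]) auto

lemma A5_finite_index:
  fixes J :: "nat set"
  assumes J: "finite J" and j: "j \<in> J"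
    and \<delta>: "0 < \<delta>" "\<delta> < 1" and \<beta>: "0 < \<beta>" "\<beta> < 1" and \<gamma>: "0 < \<gamma>" "\<gamma> < 1"
    and J_mem: "\<forall>i\<in>J. us i \<in> Y \<and> as i \<in> A" and ua: "u \<in> Y" "a \<in> A"
    and sep: "\<forall>i\<in>J. \<forall>k\<in>J. i \<noteq> k \<longrightarrow> dist (us i) (us k) > \<delta>"
    and meet: "\<forall>i\<in>J. TB \<delta> u a \<inter> TB \<delta> (us i) (as i) \<noteq> {} \<and> dist (us i) u \<ge> \<beta> / 8"
  shows "real (card {i\<in>J. dist (us i) (us j) \<le> \<beta> \<and>
              TB \<delta> (us i) (as i) \<inter> TB \<delta> (us j) (as j) \<noteq> {} \<and>
              setdist2 d' (TB \<delta> (us i) (as i) \<inter> TB \<delta> (us j) (as j))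
                          (TB \<delta> (us j) (as j) \<inter> TB \<delta> u a) \<ge> ennreal \<gamma>})
           \<le> C' * \<delta> powr (- lam) * \<beta> * \<gamma> powr (- \<alpha>)"
proof -
  define n where "n = card J"
  obtain h where h: "bij_betw h {..<n} J"
    using ex_bij_betw_nat_finite[OF J] unfolding n_def atLeast0LessThan by blast
  then obtain j' where j': "j' < n" "h j' = j" using j unfolding bij_betw_def by auto
  have hJ: "i < n \<Longrightarrow> h i \<in> J" for i using h unfolding bij_betw_def by auto
  have h_inj: "inj_on h {..<n}" using h unfolding bij_betw_def by auto
  then have h_neq: "i < n \<Longrightarrow> k < n \<Longrightarrow> i \<noteq> k \<Longrightarrow> h i \<noteq> h k" for i k
    by (auto simp: inj_on_def)
  let ?P = "\<lambda>i. dist (us i) (us j) \<le> \<beta> \<and>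
              TB \<delta> (us i) (as i) \<inter> TB \<delta> (us j) (as j) \<noteq> {} \<and>
              setdist2 d' (TB \<delta> (us i) (as i) \<inter> TB \<delta> (us j) (as j))
                          (TB \<delta> (us j) (as j) \<inter> TB \<delta> u a) \<ge> ennreal \<gamma>"
  have "(\<forall>i<n. (us \<circ> h) i \<in> Y \<and> (as \<circ> h) i \<in> A) \<and>
        (\<forall>i<n. \<forall>k<n. i \<noteq> k \<longrightarrow> dist ((us \<circ> h) i) ((us \<circ> h) k) > \<delta>) \<and>
        (\<forall>i<n. TB \<delta> u a \<inter> TB \<delta> ((us \<circ> h) i) ((as \<circ> h) i) \<noteq> {} \<and> dist ((us \<circ> h) i) u \<ge> \<beta> / 8)"
    using J_mem sep meet hJ h_neq by auto
  then have "real (card {i. i < n \<and> ?P (h i)}) \<le> C' * \<delta> powr (- lam) * \<beta> * \<gamma> powr (- \<alpha>)"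
    using A5[rule_format, of \<delta> \<beta> \<gamma> n "us \<circ> h" "as \<circ> h" u a] \<delta> \<beta> \<gamma> ua j' by auto
  moreover have "{i\<in>J. ?P i} = h ` {i. i < n \<and> ?P (h i)}"
    using h hJ unfolding bij_betw_def by fastforce
  moreover have "inj_on h {i. i < n \<and> ?P (h i)}" using h_inj by (auto simp: inj_on_def)
  ultimately show ?thesis by (simp add: card_image)
qed

lemma \<nu>_cball_bounds:
  assumes "u \<in> Y" "0 < r" "v \<in> Y" "w \<in> Y" "r < dist v w"
  shows "ennreal (c0t * r powr S) \<le> emeasure \<nu> (cball u r)"
    and "emeasure \<nu> (cball u r) \<le> ennreal (C0t * r powr S)"
proof -
  have "0 < r \<and> (\<exists>v\<in>Y. \<exists>w\<in>Y. r < dist v w)" using assms by blast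
  from \<nu>_cball[rule_format, OF assms(1) this]
  show "ennreal (c0t * r powr S) \<le> emeasure \<nu> (cball u r)"
    and "emeasure \<nu> (cball u r) \<le> ennreal (C0t * r powr S)" by auto
qed

text \<open>Packing: disjoint balls of radius \<open>\<delta>/2\<close> around \<open>\<delta>\<close>-separated directions inside a ball of radius \<open>\<beta>\<close>
  are counted with the two-sided Ahlfors bound for \<open>\<nu>\<close>.\<close>

lemma card_separated_in_ball_packing:
  fixes J :: "nat set" and us :: "nat \<Rightarrow> 'z"
  assumes vw: "v \<in> Y" "w \<in> Y" "\<beta> + \<delta>/2 < dist v w" and \<delta>: "\<delta> > 0" "\<delta> \<le> \<beta>"
    and J: "finite J" "\<forall>i\<in>J. us i \<in> Y"
    and sep: "\<forall>i\<in>J. \<forall>k\<in>J. i \<noteq> k \<longrightarrow> dist (us i) (us k) > \<delta>" and z: "z \<in> Y"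
  shows "real (card {i\<in>J. dist (us i) z \<le> \<beta>}) * (c0t * (\<delta>/2) powr S) \<le> C0t * (\<beta> + \<delta>/2) powr S"
proof -
  define H where "H = {i\<in>J. dist (us i) z \<le> \<beta>}"
  have H: "finite H" "H \<subseteq> J" using J unfolding H_def by auto
  define B where "B i = cball (us i) (\<delta>/2)" for i
  have B_sets: "B ` H \<subseteq> sets \<nu>" unfolding B_def sets_\<nu> by (auto intro: borel_closed)
  have disj: "disjoint_family_on B H"
    unfolding disjoint_family_on_def
  proof (intro ballI impI, rule ccontr)
    fix i k assume ik: "i \<in> H" "k \<in> H" "i \<noteq> k" "B i \<inter> B k \<noteq> {}"
    then obtain x where "dist (us i) x \<le> \<delta>/2" "dist (us k) x \<le> \<delta>/2" by (auto simp: B_def)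
    then have "dist (us i) (us k) \<le> \<delta>"
      using dist_triangle[of "us i" "us k" x] dist_commute[of x "us k"] by linarith
    moreover have "dist (us i) (us k) > \<delta>" using sep ik H by blast
    ultimately show False by simp
  qed
  have B_ge: "ennreal (c0t * (\<delta>/2) powr S) \<le> emeasure \<nu> (B i)" if "i \<in> H" for i
  proof -
    have "us i \<in> Y" "0 < \<delta>/2" "\<delta>/2 < dist v w" using that H J vw \<delta> by auto
    from \<nu>_cball_bounds(1)[OF this(1,2) vw(1,2) this(3)] show ?thesis unfolding B_def .
  qed
  have "of_nat (card H) * ennreal (c0t * (\<delta>/2) powr S) = (\<Sum>i\<in>H. ennreal (c0t * (\<delta>/2) powr S))"
    by simp
  also have "\<dots> \<le> (\<Sum>i\<in>H. emeasure \<nu> (B i))" by (intro sum_mono B_ge)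
  also have "\<dots> = emeasure \<nu> (\<Union>i\<in>H. B i)" using sum_emeasure[OF B_sets disj H(1)] .
  also have "\<dots> \<le> emeasure \<nu> (cball z (\<beta> + \<delta>/2))"
  proof (rule emeasure_mono)
    show "(\<Union>i\<in>H. B i) \<subseteq> cball z (\<beta> + \<delta>/2)"
    proof
      fix x assume "x \<in> (\<Union>i\<in>H. B i)"
      then obtain i where "i \<in> H" "dist (us i) x \<le> \<delta>/2" by (auto simp: B_def)
      then have "dist (us i) z \<le> \<beta>" "dist (us i) x \<le> \<delta>/2" by (auto simp: H_def)
      then have "dist z x \<le> \<beta> + \<delta>/2"
        using dist_triangle[of z x "us i"] dist_commute[of z "us i"] by linarith
      then show "x \<in> cball z (\<beta> + \<delta>/2)" by simp
    qed
    show "cball z (\<beta> + \<delta>/2) \<in> sets \<nu>" unfolding sets_\<nu> by (auto intro: borel_closed)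
  qed
  also have "\<dots> \<le> ennreal (C0t * (\<beta> + \<delta>/2) powr S)"
  proof -
    have "0 < \<beta> + \<delta>/2" using \<delta> by simp
    from \<nu>_cball_bounds(2)[OF z this vw] show ?thesis .
  qed
  finally have "ennreal (real (card H) * (c0t * (\<delta>/2) powr S)) \<le> ennreal (C0t * (\<beta> + \<delta>/2) powr S)"
    using c0t \<delta> by (simp add: ennreal_mult ennreal_of_nat_eq_real_of_nat)
  then show ?thesis
    using c0t \<delta> unfolding H_def by (subst (asm) ennreal_le_iff) (auto intro!: mult_nonneg_nonneg)
qed

lemma card_separated_in_ball_le:
  fixes J :: "nat set" and us :: "nat \<Rightarrow> 'z"
  assumes vw: "v \<in> Y" "w \<in> Y" "\<beta> + \<delta>/2 < dist v w" and \<delta>: "\<delta> > 0" "\<delta> \<le> \<beta>"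
    and J: "finite J" "\<forall>i\<in>J. us i \<in> Y"
    and sep: "\<forall>i\<in>J. \<forall>k\<in>J. i \<noteq> k \<longrightarrow> dist (us i) (us k) > \<delta>" and z: "z \<in> Y"
  shows "real (card {i\<in>J. dist (us i) z \<le> \<beta>}) \<le> (C0t/c0t) * 3 powr S * (\<beta>/\<delta>) powr S"
proof -
  let ?H = "{i\<in>J. dist (us i) z \<le> \<beta>}"
  have "real (card ?H) * (c0t * (\<delta>/2) powr S) \<le> C0t * (\<beta> + \<delta>/2) powr S"
    by (rule card_separated_in_ball_packing[OF assms])
  also have "\<dots> \<le> C0t * ((3 * (\<beta>/\<delta>)) * (\<delta>/2)) powr S"
  proof -
    have "\<beta> + \<delta>/2 \<le> (3 * (\<beta>/\<delta>)) * (\<delta>/2)" using \<delta> by (simp add: field_simps)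
    then show ?thesis using c0t \<delta> S by (intro mult_left_mono powr_mono2) auto
  qed
  also have "\<dots> = C0t * (3 powr S * (\<beta>/\<delta>) powr S * (\<delta>/2) powr S)"
  proof -
    have "0 \<le> 3 * (\<beta>/\<delta>)" "0 \<le> \<beta>/\<delta>" "0 \<le> \<delta>/2" "(0::real) \<le> 3" using \<delta> by auto
    then show ?thesis by (simp only: powr_mult)
  qed
  also have "\<dots> = (C0t/c0t) * 3 powr S * (\<beta>/\<delta>) powr S * (c0t * (\<delta>/2) powr S)"
    using c0t by (simp add: field_simps)
  finally have "real (card ?H) * (c0t * (\<delta>/2) powr S)
      \<le> (C0t/c0t) * 3 powr S * (\<beta>/\<delta>) powr S * (c0t * (\<delta>/2) powr S)" .
  moreover have "c0t * (\<delta>/2) powr S > 0" using c0t \<delta> by simp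
  ultimately show ?thesis by (rule mult_right_le_imp_le)
qed

definition wide_const :: real where
  "wide_const = (c2 * (4 + 20*b)) powr (1-q) * (2*b*c2*C') powr q"

definition narrow_const :: real where
  "narrow_const = (c2 * (4 + 20*b)) powr (1-q) * ((C0t/c0t) * 3 powr S * (2*b*c2)) powr q"

definition group_const :: real where
  "group_const = wide_const + narrow_const"

lemma group_const_nonneg: "group_const \<ge> 0"
  unfolding group_const_def wide_const_def narrow_const_def by simp

end

text \<open>A cluster of a hairbrush with core tube \<open>T0\<close>: directions pairwise within \<open>R\<close> and at distance
  at least \<open>R/8\<close> from the core direction \<open>u\<close>, so that (A5) applies at every scale \<open>\<beta> \<le> R\<close>.
  The points \<open>v, w\<close> only witness that \<open>Y\<close> is wide enough for the Ahlfors bounds of \<open>\<nu>\<close>.\<close>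

locale hairbrush_cluster = hairbrush_setting +
  fixes \<delta> :: real and us as u a and J :: "nat set" and R :: real and v w
  assumes \<delta>: "0 < \<delta>" "\<delta> \<le> 1/2"
    and J: "finite J" and J_mem: "\<forall>i\<in>J. us i \<in> Y \<and> as i \<in> A" and ua: "u \<in> Y" "a \<in> A"
    and sep: "\<forall>i\<in>J. \<forall>k\<in>J. i \<noteq> k \<longrightarrow> dist (us i) (us k) > \<delta>"
    and meet: "\<forall>i\<in>J. TB \<delta> u a \<inter> TB \<delta> (us i) (as i) \<noteq> {}"
    and R: "0 < R" "R < 1" and diam_J: "\<forall>i\<in>J. \<forall>k\<in>J. dist (us i) (us k) \<le> R"
    and far_from_core: "\<forall>i\<in>J. dist (us i) u \<ge> R/8"
    and vw: "v \<in> Y" "w \<in> Y" "R + \<delta>/2 < dist v w"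
begin

abbreviation "T i \<equiv> TB \<delta> (us i) (as i)"
abbreviation "T0 \<equiv> TB \<delta> u a"
abbreviation "gap i j \<equiv> setdist2 d' (T i \<inter> T j) (T j \<inter> T0)"
abbreviation "tube_count G x \<equiv> (\<Sum>i\<in>G. indicator (T i) x :: real)"

lemma \<delta>_less_1: "\<delta> < 1"
  using \<delta> by simp

lemma dist_ratio_le: "0 < \<beta> \<Longrightarrow> \<beta>/2 < r \<Longrightarrow> b * \<delta> / r \<le> 2 * b * \<delta> / \<beta>"
  using divide_left_mono[of "\<beta>/2" r "b * \<delta>"] b_pos \<delta> by (simp add: mult.commute mult.left_commute)

lemma diam_tube_inter_le:
  assumes "i \<in> J" "j \<in> J" "i \<noteq> j"
  shows "diam2 d' (T i \<inter> T j) \<le> ennreal (b * \<delta> / dist (us i) (us j))"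
proof -
  have "us i \<noteq> us j" using sep assms \<delta> by fastforce
  then show ?thesis using A3 assms J_mem \<delta> \<delta>_less_1 by blast
qed

lemma diam_core_inter_le:
  assumes j: "j \<in> J"
  shows "diam2 d' (T j \<inter> T0) \<le> ennreal (8 * b * \<delta> / R)"
proof -
  have far: "dist (us j) u \<ge> R/8" using far_from_core j by blast
  then have "us j \<noteq> u" using R by auto
  then have "diam2 d' (T j \<inter> T0) \<le> ennreal (b * \<delta> / dist (us j) u)"
    using A3 j J_mem ua \<delta> \<delta>_less_1 by blast
  also have "b * \<delta> / dist (us j) u \<le> b * \<delta> / (R/8)"
    using far R b_pos \<delta> by (intro divide_left_mono) (auto intro!: mult_pos_pos)
  also have "\<dots> = 8 * b * \<delta> / R" by simp
  finally show ?thesis by (simp add: ennreal_leI)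
qed

lemma emeasure_tube_inter_le:
  assumes "i \<in> J" "j \<in> J" "i \<noteq> j" "0 < \<beta>" "\<beta>/2 < dist (us i) (us j)"
  shows "emeasure \<mu> (T i \<inter> T j) \<le> ennreal (c2 * (2 * b * \<delta> / \<beta>) * \<delta> powr Tx)"
proof -
  have "us i \<noteq> us j" using sep assms \<delta> by fastforce
  then have "emeasure \<mu> (T i \<inter> T j) \<le> ennreal (c2 * (b * \<delta> / dist (us i) (us j)) * \<delta> powr Tx)"
    using emeasure_btube_inter_le[of "as i" "as j" "us i" "us j" \<delta>] J_mem assms \<delta> \<delta>_less_1 by auto
  also have "\<dots> \<le> ennreal (c2 * (2 * b * \<delta> / \<beta>) * \<delta> powr Tx)"
    using dist_ratio_le[OF assms(4,5)] c2_pos by (intro ennreal_leI mult_right_mono mult_left_mono) auto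
  finally show ?thesis .
qed

text \<open>Tubes meeting \<open>T j\<close> at angle about \<open>\<beta>\<close> and within \<open>d'\<close>-distance \<open>h\<close> of the core piece \<open>T j \<inter> T0\<close>
  meet \<open>T j\<close> inside a set of \<open>d'\<close>-diameter \<open>O(h + \<delta>/\<beta>)\<close>, by (A3) applied to \<open>T i \<inter> T j\<close> and \<open>T j \<inter> T0\<close>.\<close>

lemma diam_near_core_le:
  assumes j: "j \<in> J" and G: "G \<subseteq> J - {j}" and \<beta>: "0 < \<beta>" "\<beta> \<le> R" and h: "h > 0"
    and G_near: "\<forall>i\<in>G. \<beta>/2 < dist (us i) (us j) \<and> gap i j < ennreal h"
  shows "diam2 d' (T j \<inter> (\<Union>i\<in>G. T i)) \<le> ennreal (2 * h + 20 * b * \<delta> / \<beta>)"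
proof -
  obtain z0 where z0: "z0 \<in> T j \<inter> T0" using meet j by blast
  have core: "8 * b * \<delta> / R \<le> 8 * b * \<delta> / \<beta>" using \<beta> b_pos \<delta> by (intro divide_left_mono) auto
  have near: "d' x z0 \<le> 2 * b * \<delta> / \<beta> + h + 8 * b * \<delta> / \<beta>"
    if x: "x \<in> T j" "i \<in> G" "x \<in> T i" for x i
  proof -
    have i: "i \<in> J" "i \<noteq> j" "\<beta>/2 < dist (us i) (us j)" using G G_near x by auto
    obtain y1 y2 where y: "y1 \<in> T i \<inter> T j" "y2 \<in> T j \<inter> T0" "d' y1 y2 < h"
      using setdist2_less_imp[of d' "T i \<inter> T j" "T j \<inter> T0" h] G_near x by blast
    have "d' x y1 \<le> b * \<delta> / dist (us i) (us j)"
      using le_of_diam2_le[OF _ _ diam_tube_inter_le[OF i(1) j i(2)]] x y b_pos \<delta> i \<beta>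
      by (auto intro!: divide_nonneg_nonneg)
    moreover have "d' y2 z0 \<le> 8 * b * \<delta> / R"
      using le_of_diam2_le[OF _ _ diam_core_inter_le[OF j]] z0 y b_pos \<delta> R by auto
    moreover have "d' x z0 \<le> d' x y1 + d' y1 y2 + d' y2 z0"
      using d'_triangle[where x=x and y=y1 and z=z0] d'_triangle[where x=y1 and y=y2 and z=z0] by linarith
    ultimately show ?thesis using dist_ratio_le[OF \<beta>(1) i(3)] core y by linarith
  qed
  show ?thesis
  proof (rule diam2_le)
    fix x y assume "x \<in> T j \<inter> (\<Union>i\<in>G. T i)" "y \<in> T j \<inter> (\<Union>i\<in>G. T i)"
    then have "d' x z0 \<le> 2 * b * \<delta> / \<beta> + h + 8 * b * \<delta> / \<beta>" "d' y z0 \<le> 2 * b * \<delta> / \<beta> + h + 8 * b * \<delta> / \<beta>"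
      using near by auto
    moreover have "d' x y \<le> d' x z0 + d' y z0"
      using d'_triangle[where x=x and y=z0 and z=y] d'_commute[of z0 y] by simp
    moreover have "2 * (2 * b * \<delta> / \<beta> + h + 8 * b * \<delta> / \<beta>) = 2 * h + 20 * b * \<delta> / \<beta>"
      by (simp add: field_simps)
    ultimately show "d' x y \<le> 2 * h + 20 * b * \<delta> / \<beta>" by linarith
  qed
qed

lemma emeasure_near_core_le:
  assumes j: "j \<in> J" and G: "G \<subseteq> J - {j}" and \<beta>: "0 < \<beta>" "\<beta> \<le> R" and h: "h > 0"
    and G_near: "\<forall>i\<in>G. \<beta>/2 < dist (us i) (us j) \<and> gap i j < ennreal h"
    and r: "2 * h + 20 * b * \<delta> / \<beta> \<le> r"
  shows "emeasure \<mu> (T j \<inter> (\<Union>i\<in>G. T i)) \<le> ennreal (c2 * r * \<delta> powr Tx)"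
proof -
  have diam: "diam2 d' (T j \<inter> (\<Union>i\<in>G. T i)) \<le> ennreal r"
    using diam_near_core_le[OF j G \<beta> h G_near] ennreal_leI[OF r] by (rule order_trans)
  have "0 \<le> 20 * b * \<delta> / \<beta>" using b_pos \<delta> \<beta> by simp
  then have r_nonneg: "0 \<le> r" using r h by linarith
  have "as j \<in> A" "us j \<in> Y" using J_mem j by auto
  from emeasure_subset_btube_le[OF this \<delta>(1) \<delta>_less_1 Int_lower1 r_nonneg diam] show ?thesis .
qed

text \<open>Jensen on \<open>T j \<inter> \<Union>G\<close>, where \<open>\<integral> \<chi>\<^bsub>T j\<^esub> \<Sum>\<^bsub>i\<in>G\<^esub> \<chi>\<^bsub>T i\<^esub>\<close> is at most \<open>#G\<close> times the measure of one
  intersection \<open>T i \<inter> T j\<close>.\<close>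

lemma nn_integral_group_le:
  assumes j: "j \<in> J" and G: "G \<subseteq> J - {j}" and \<beta>: "\<beta> > 0"
    and G_far: "\<forall>i\<in>G. \<beta>/2 < dist (us i) (us j)"
    and Mv: "emeasure \<mu> (T j \<inter> (\<Union>i\<in>G. T i)) \<le> ennreal Mv" "Mv > 0"
    and Cnt: "real (card G) \<le> Cnt" "Cnt > 0"
  shows "(\<integral>\<^sup>+x. ennreal ((indicator (T j) x * tube_count G x) powr q) \<partial>\<mu>)
     \<le> ennreal (Mv powr (1-q) * (Cnt * (c2 * (2 * b * \<delta> / \<beta>) * \<delta> powr Tx)) powr q)"
proof (rule nn_integral_powr_le_concave)
  have G_fin: "finite G" using G J finite_subset by blast
  show "(\<lambda>x. indicator (T j) x * tube_count G x) \<in> borel_measurable \<mu>" by measurable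
  show "\<And>x. 0 \<le> indicator (T j) x * tube_count G x" by (simp add: sum_nonneg)
  show "T j \<inter> (\<Union>i\<in>G. T i) \<in> sets \<mu>" using G_fin by measurable
  show "\<And>x. x \<notin> T j \<inter> (\<Union>i\<in>G. T i) \<Longrightarrow> indicator (T j) x * tube_count G x = 0"
    by (auto simp: indicator_def)
  show "0 < q" "q \<le> 1" using q_pos q by auto
  have c1: "c2 * (2 * b * \<delta> / \<beta>) * \<delta> powr Tx > 0" using c2_pos b_pos \<delta> \<beta> by simp
  then show "0 < Cnt * (c2 * (2 * b * \<delta> / \<beta>) * \<delta> powr Tx)" using Cnt mult_pos_pos by blast
  have "ennreal (indicator (T j) x * tube_count G x) = (\<Sum>i\<in>G. indicator (T i \<inter> T j) x)" for x
  proof -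
    have "indicator (T j) x * tube_count G x = (\<Sum>i\<in>G. indicator (T i \<inter> T j) x :: real)"
      by (simp add: sum_distrib_left indicator_inter_arith mult.commute)
    then show ?thesis by (simp add: ennreal_indicator[symmetric])
  qed
  then have "(\<integral>\<^sup>+x. ennreal (indicator (T j) x * tube_count G x) \<partial>\<mu>) = (\<Sum>i\<in>G. emeasure \<mu> (T i \<inter> T j))"
    by (simp add: nn_integral_sum)
  also have "\<dots> \<le> (\<Sum>i\<in>G. ennreal (c2 * (2 * b * \<delta> / \<beta>) * \<delta> powr Tx))"
    using G G_far j \<beta> by (intro sum_mono emeasure_tube_inter_le) auto
  also have "\<dots> = ennreal (real (card G) * (c2 * (2 * b * \<delta> / \<beta>) * \<delta> powr Tx))"
    using c1 by (intro sum_const_ennreal) simp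
  also have "\<dots> \<le> ennreal (Cnt * (c2 * (2 * b * \<delta> / \<beta>) * \<delta> powr Tx))"
    using Cnt c1 by (intro ennreal_leI mult_right_mono) auto
  finally show "(\<integral>\<^sup>+x. ennreal (indicator (T j) x * tube_count G x) \<partial>\<mu>)
      \<le> ennreal (Cnt * (c2 * (2 * b * \<delta> / \<beta>) * \<delta> powr Tx))" .
qed (use Mv in auto)

lemma nn_integral_wide_group_le:
  assumes j: "j \<in> J" and \<beta>: "0 < \<beta>" "\<beta> \<le> R" and g: "0 < g" "g \<le> 1/2" "g = 1/2 \<or> \<delta>/\<beta> \<le> g"
    and G: "G \<subseteq> {i\<in>J-{j}. \<beta>/2 < dist (us i) (us j) \<and> dist (us i) (us j) \<le> \<beta> \<and> T i \<inter> T j \<noteq> {} \<and>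
               ennreal g \<le> gap i j \<and> (g = 1/2 \<or> gap i j < ennreal (2*g))}"
  shows "(\<integral>\<^sup>+x. ennreal ((indicator (T j) x * tube_count G x) powr q) \<partial>\<mu>)
     \<le> ennreal (wide_const * \<delta> powr Tx * \<delta> powr (1 - q * (lam + \<alpha>)))"
proof -
  have \<beta>1: "\<beta> < 1" using \<beta> R by simp
  have \<delta>g: "\<delta> \<le> g"
  proof (cases "g = 1/2")
    case False
    then have "\<delta>/\<beta> \<le> g" using g by simp
    moreover have "\<delta> \<le> \<delta>/\<beta>" using \<delta> \<beta> \<beta>1 by (simp add: field_simps)
    ultimately show ?thesis by linarith
  qed (use \<delta> in simp)
  define Cnt where "Cnt = C' * \<delta> powr (- lam) * \<beta> * g powr (- \<alpha>)"
  define Mv where "Mv = c2 * (4 + 20*b) * g * \<delta> powr Tx"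
  have card_G: "real (card G) \<le> Cnt"
  proof -
    let ?H = "{i\<in>J. dist (us i) (us j) \<le> \<beta> \<and> T i \<inter> T j \<noteq> {} \<and> gap i j \<ge> ennreal g}"
    have "card G \<le> card ?H" using G J by (intro card_mono) auto
    moreover have "real (card ?H) \<le> Cnt" unfolding Cnt_def
    proof (rule A5_finite_index[OF J j \<delta>(1) \<delta>_less_1 \<beta>(1) \<beta>1 g(1) _ J_mem ua sep])
      show "g < 1" using g by simp
      show "\<forall>i\<in>J. TB \<delta> u a \<inter> TB \<delta> (us i) (as i) \<noteq> {} \<and> \<beta> / 8 \<le> dist (us i) u"
        using meet far_from_core \<beta> by fastforce
    qed
    ultimately show ?thesis by linarith
  qed
  have meas_G: "emeasure \<mu> (T j \<inter> (\<Union>i\<in>G. T i)) \<le> ennreal Mv"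
  proof (cases "g = 1/2")
    case True
    have "emeasure \<mu> (T j \<inter> (\<Union>i\<in>G. T i)) \<le> emeasure \<mu> (T j)" by (intro emeasure_mono) auto
    also have "\<dots> \<le> ennreal (c2 * \<delta> powr Tx)" using emeasure_btube_le J_mem j \<delta> \<delta>_less_1 by blast
    also have "\<dots> \<le> ennreal Mv" unfolding Mv_def True using c2_pos b_pos
      by (intro ennreal_leI) (simp add: field_simps)
    finally show ?thesis .
  next
    case False
    then have "\<delta>/\<beta> \<le> g" using g by simp
    then have "2 * (2*g) + 20 * b * \<delta> / \<beta> \<le> (4 + 20*b) * g"
      using mult_left_mono[of "\<delta>/\<beta>" g "20*b"] b_pos by (simp add: algebra_simps)
    from emeasure_near_core_le[OF j _ \<beta> _ _ this] G g False show ?thesis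
      by (auto simp: Mv_def mult.assoc)
  qed
  have "(\<integral>\<^sup>+x. ennreal ((indicator (T j) x * tube_count G x) powr q) \<partial>\<mu>)
     \<le> ennreal (Mv powr (1-q) * (Cnt * (c2 * (2 * b * \<delta> / \<beta>) * \<delta> powr Tx)) powr q)"
    using G \<beta> C'_pos c2_pos b_pos \<delta> g
    by (intro nn_integral_group_le[OF j _ \<beta>(1) _ meas_G _ card_G]) (auto simp: Mv_def Cnt_def)
  also have "Mv powr (1-q) * (Cnt * (c2 * (2 * b * \<delta> / \<beta>) * \<delta> powr Tx)) powr q
     = ((c2 * (4 + 20*b)) * g * \<delta> powr Tx) powr (1-q)
       * ((2*b*c2*C') * \<delta> powr (-lam) * g powr (-\<alpha>) * \<delta> * \<delta> powr Tx) powr q"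
    unfolding Mv_def Cnt_def using \<beta> by (simp add: field_simps)
  also have "\<dots> \<le> wide_const * \<delta> powr Tx * \<delta> powr (1 - q * (lam + \<alpha>))"
    unfolding wide_const_def using c2_pos b_pos C'_pos \<delta> \<delta>g q_pos q one_le_q_mul_alpha
    by (intro powr_interpolation_le_wide) auto
  finally show ?thesis by (simp add: ennreal_leI)
qed

lemma nn_integral_narrow_group_le:
  assumes j: "j \<in> J" and \<beta>: "0 < \<beta>" "\<beta> \<le> R" and h: "0 < h" "h \<le> 2 * \<delta> / \<beta>"
    and G: "G \<subseteq> {i\<in>J-{j}. \<beta>/2 < dist (us i) (us j) \<and> dist (us i) (us j) \<le> \<beta> \<and> gap i j < ennreal h}"
  shows "(\<integral>\<^sup>+x. ennreal ((indicator (T j) x * tube_count G x) powr q) \<partial>\<mu>)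
     \<le> ennreal (narrow_const * \<delta> powr Tx * \<delta> powr (1 - q * (lam + \<alpha>)))"
proof (cases "G = {}")
  case True
  then show ?thesis using q_pos by simp
next
  case False
  then obtain i0 where "i0 \<in> G" by blast
  then have "\<delta> < dist (us i0) (us j)" "dist (us i0) (us j) \<le> \<beta>" using G sep j by auto
  then have \<delta>\<beta>: "\<delta> \<le> \<beta>" by simp
  have \<beta>1: "\<beta> < 1" using \<beta> R by simp
  define Cnt where "Cnt = (C0t/c0t) * 3 powr S * (\<beta>/\<delta>) powr S"
  define Mv where "Mv = c2 * (4 + 20*b) * (\<delta>/\<beta>) * \<delta> powr Tx"
  have card_G: "real (card G) \<le> Cnt"
  proof -
    let ?H = "{i\<in>J. dist (us i) (us j) \<le> \<beta>}"
    have "card G \<le> card ?H" using G J by (intro card_mono) auto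
    moreover have "real (card ?H) \<le> Cnt" unfolding Cnt_def
      using vw \<beta> J_mem j by (intro card_separated_in_ball_le[OF vw(1,2) _ \<delta>(1) \<delta>\<beta> J(1) _ sep]) auto
    ultimately show ?thesis by linarith
  qed
  have "2 * h + 20 * b * \<delta> / \<beta> \<le> (4 + 20*b) * (\<delta>/\<beta>)"
  proof -
    have "2 * h \<le> 4 * (\<delta>/\<beta>)" using h by simp
    then show ?thesis by (simp add: algebra_simps)
  qed
  from emeasure_near_core_le[OF j _ \<beta> h(1) _ this] G
  have meas_G: "emeasure \<mu> (T j \<inter> (\<Union>i\<in>G. T i)) \<le> ennreal Mv" by (auto simp: Mv_def mult.assoc)
  have "(\<integral>\<^sup>+x. ennreal ((indicator (T j) x * tube_count G x) powr q) \<partial>\<mu>)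
     \<le> ennreal (Mv powr (1-q) * (Cnt * (c2 * (2 * b * \<delta> / \<beta>) * \<delta> powr Tx)) powr q)"
    using G \<beta> c0t c2_pos b_pos \<delta>
    by (intro nn_integral_group_le[OF j _ \<beta>(1) _ meas_G _ card_G]) (auto simp: Mv_def Cnt_def)
  also have "Mv powr (1-q) * (Cnt * (c2 * (2 * b * \<delta> / \<beta>) * \<delta> powr Tx)) powr q
     = ((c2 * (4 + 20*b)) * (\<delta>/\<beta>) * \<delta> powr Tx) powr (1-q)
       * (((C0t/c0t) * 3 powr S * (2*b*c2)) * (\<beta>/\<delta>) powr S * (\<delta>/\<beta>) * \<delta> powr Tx) powr q"
    unfolding Mv_def Cnt_def using \<beta> by (simp add: field_simps)
  also have "\<dots> \<le> narrow_const * \<delta> powr Tx * \<delta> powr (1 - q * (lam + \<alpha>))"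
  proof -
    have "q * (1 + \<alpha>) \<le> q * S" using \<alpha> q_pos by (intro mult_left_mono) auto
    then have "1 \<le> q * S" using one_le_q_mul_alpha by linarith
    then show ?thesis
      unfolding narrow_const_def using c2_pos b_pos c0t \<delta> \<delta>\<beta> \<beta>1 q_pos q lam
      by (intro powr_interpolation_le_narrow) auto
  qed
  finally show ?thesis by (simp add: ennreal_leI)
qed

text \<open>The tubes crossing \<open>T j\<close> are sorted by the dyadic scale \<open>R/2^k\<close> of their angle with \<open>T j\<close> and by
  the dyadic size \<open>2^-m\<close> of their \<open>d'\<close>-gap to the core piece \<open>T j \<inter> T0\<close>; the level \<open>m = 0\<close> collects
  all gaps below \<open>2^-M\<close>.\<close>

definition dyadic_group :: "nat \<Rightarrow> nat \<Rightarrow> nat \<times> nat \<Rightarrow> nat set" where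
  "dyadic_group j M km = {i\<in>J-{j}. R/2^(fst km)/2 < dist (us i) (us j) \<and> dist (us i) (us j) \<le> R/2^(fst km) \<and>
     T i \<inter> T j \<noteq> {} \<and> (if snd km = 0 then gap i j < ennreal (1/2^M)
        else ennreal (1/2^(snd km)) \<le> gap i j \<and> (snd km = 1 \<or> gap i j < ennreal (2 * (1/2^(snd km)))))}"

lemma nn_integral_dyadic_group_le:
  assumes j: "j \<in> J" and M: "1/2^M \<le> \<delta>"
  shows "(\<integral>\<^sup>+x. ennreal ((indicator (T j) x * tube_count (dyadic_group j M (k,m)) x) powr q) \<partial>\<mu>)
     \<le> ennreal (group_const * \<delta> powr Tx * \<delta> powr (1 - q * (lam + \<alpha>)))"
proof -
  define \<beta> where "\<beta> = R/2^k"
  have \<beta>: "0 < \<beta>" "\<beta> \<le> R" using R by (auto simp: \<beta>_def divide_le_eq)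
  have \<delta>\<beta>: "\<delta> \<le> 2 * \<delta> / \<beta>"
  proof -
    have "\<delta> \<le> \<delta>/\<beta>" using \<delta> \<beta> R by (simp add: field_simps)
    also have "\<dots> \<le> 2 * \<delta> / \<beta>" using \<delta> \<beta> by (simp add: divide_right_mono)
    finally show ?thesis .
  qed
  have to_group: "ennreal (K * \<delta> powr Tx * \<delta> powr (1 - q * (lam + \<alpha>)))
      \<le> ennreal (group_const * \<delta> powr Tx * \<delta> powr (1 - q * (lam + \<alpha>)))" if "K \<le> group_const" for K
    using that by (intro ennreal_leI mult_right_mono) auto
  have wide: "wide_const \<le> group_const" and narrow: "narrow_const \<le> group_const"
    unfolding group_const_def wide_const_def narrow_const_def by auto
  show ?thesis
  proof (cases "m = 0")
    case True
    have "dyadic_group j M (k,m) \<subseteq>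
        {i\<in>J-{j}. \<beta>/2 < dist (us i) (us j) \<and> dist (us i) (us j) \<le> \<beta> \<and> gap i j < ennreal (1/2^M)}"
      using True by (auto simp: dyadic_group_def \<beta>_def)
    from nn_integral_narrow_group_le[OF j \<beta> _ _ this] M \<delta>\<beta>
    show ?thesis using to_group[OF narrow] by (auto intro: order_trans)
  next
    case m: False
    define g where "g = (1/2^m :: real)"
    have "(2::real)^1 \<le> 2^m" using m by (intro power_increasing) auto
    then have g: "0 < g" "g \<le> 1/2" by (auto simp: g_def)
    show ?thesis
    proof (cases "m = 1 \<or> \<delta>/\<beta> \<le> g")
      case True
      then have g_wide: "g = 1/2 \<or> \<delta>/\<beta> \<le> g" by (auto simp: g_def)
      have "dyadic_group j M (k,m) \<subseteq> {i\<in>J-{j}. \<beta>/2 < dist (us i) (us j) \<and> dist (us i) (us j) \<le> \<beta> \<and>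
          T i \<inter> T j \<noteq> {} \<and> ennreal g \<le> gap i j \<and> (g = 1/2 \<or> gap i j < ennreal (2*g))}"
        using m by (auto simp: dyadic_group_def \<beta>_def g_def)
      from nn_integral_wide_group_le[OF j \<beta> g g_wide this]
      show ?thesis using to_group[OF wide] by (rule order_trans)
    next
      case False
      then have h: "0 < 2 * g" "2 * g \<le> 2 * \<delta> / \<beta>" using g by auto
      have "dyadic_group j M (k,m) \<subseteq>
          {i\<in>J-{j}. \<beta>/2 < dist (us i) (us j) \<and> dist (us i) (us j) \<le> \<beta> \<and> gap i j < ennreal (2*g)}"
        using m False by (auto simp: dyadic_group_def \<beta>_def g_def)
      from nn_integral_narrow_group_le[OF j \<beta> h this]
      show ?thesis using to_group[OF narrow] by (rule order_trans)
    qed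
  qed
qed

lemma ex_dyadic_group:
  assumes j: "j \<in> J" and i: "i \<in> J - {j}" "T i \<inter> T j \<noteq> {}" and M: "1/2^M \<le> \<delta>" "M \<ge> 1"
  shows "\<exists>km\<in>{0..M} \<times> {0..M}. i \<in> dyadic_group j M km"
proof -
  have "R/2^(M+1) < 1/2^(M+1)" using R by (simp add: divide_strict_right_mono)
  also have "\<dots> \<le> 1/2^M" by (intro divide_left_mono) auto
  also have "\<dots> \<le> \<delta>" by (rule M(1))
  also have "\<delta> < dist (us i) (us j)" using sep i j by blast
  finally obtain k where k: "k \<le> M" "R/2^k/2 < dist (us i) (us j)" "dist (us i) (us j) \<le> R/2^k"
    using ex_dyadic_shell[OF R(1), of "dist (us i) (us j)" M] diam_J i j by auto
  show ?thesis
  proof (cases "gap i j < ennreal (1/2^M)")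
    case True
    then have "i \<in> dyadic_group j M (k,0)" using i k by (simp add: dyadic_group_def)
    then show ?thesis using k by force
  next
    case False
    then obtain m where m: "1 \<le> m" "m \<le> M" "ennreal (1/2^m) \<le> gap i j"
      "m = 1 \<or> gap i j < ennreal (2 * (1/2^m))"
      using ex_dyadic_shell_ennreal[OF M(2)] by (auto simp: not_less)
    then have "i \<in> dyadic_group j M (k,m)" using i k by (simp add: dyadic_group_def)
    then show ?thesis using k m by force
  qed
qed

text \<open>On \<open>T j\<close>, the tube count is \<open>1\<close> plus the counts of the dyadic groups, and \<open>x \<mapsto> x powr q\<close>
  is subadditive.\<close>

lemma tube_count_powr_le:
  assumes j: "j \<in> J" and x: "x \<in> T j" and M: "1/2^M \<le> \<delta>" "M \<ge> 1"
  shows "tube_count J x powr q \<le> 1 + (\<Sum>km\<in>{0..M} \<times> {0..M}. tube_count (dyadic_group j M km) x powr q)"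
proof -
  let ?I = "{0..M} \<times> {0..M}"
  have "tube_count (J - {j}) x \<le> (\<Sum>km\<in>?I. tube_count (dyadic_group j M km) x)"
  proof (rule sum_le_sum_of_cover)
    show "finite (J - {j})" "finite ?I" using J by auto
    show "finite (dyadic_group j M km)" for km using J by (simp add: dyadic_group_def)
    fix i assume "i \<in> J - {j}" "indicator (T i) x \<noteq> (0::real)"
    then show "\<exists>km\<in>?I. i \<in> dyadic_group j M km"
      using ex_dyadic_group[OF j _ _ M] x by (auto simp: indicator_def split: if_splits)
  qed simp
  moreover have "tube_count J x = 1 + tube_count (J - {j}) x" using J j x by (simp add: sum.remove)
  moreover have "0 \<le> tube_count (J - {j}) x" by (simp add: sum_nonneg)
  ultimately have "tube_count J x powr q \<le> (1 + (\<Sum>km\<in>?I. tube_count (dyadic_group j M km) x)) powr q"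
    using q_pos by (intro powr_mono2) auto
  also have "\<dots> \<le> 1 powr q + (\<Sum>km\<in>?I. tube_count (dyadic_group j M km) x) powr q"
    using q_pos q by (intro powr_add_le_add_powr) (auto intro!: sum_nonneg)
  also have "\<dots> \<le> 1 + (\<Sum>km\<in>?I. tube_count (dyadic_group j M km) x powr q)"
    using powr_sum_le_sum_powr[of ?I "\<lambda>km. tube_count (dyadic_group j M km) x" q] q_pos q
    by (simp add: sum_nonneg)
  finally show ?thesis .
qed

lemma nn_integral_tube_le:
  assumes j: "j \<in> J" and M: "1/2^M \<le> \<delta>" "M \<ge> 1"
  shows "(\<integral>\<^sup>+x. ennreal ((indicator (T j) x * tube_count J x) powr q) \<partial>\<mu>)
     \<le> ennreal ((c2 + real ((M+1) * (M+1)) * group_const) * \<delta> powr Tx * \<delta> powr (1 - q * (lam + \<alpha>)))"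
proof -
  let ?I = "{0..M} \<times> {0..M}"
  let ?E = "\<delta> powr Tx * \<delta> powr (1 - q * (lam + \<alpha>))"
  have I: "finite ?I" "card ?I = (M+1) * (M+1)" by (auto simp: card_cartesian_product)
  have pointwise: "ennreal ((indicator (T j) x * tube_count J x) powr q)
     \<le> indicator (T j) x + (\<Sum>km\<in>?I. ennreal ((indicator (T j) x * tube_count (dyadic_group j M km) x) powr q))"
    for x
  proof (cases "x \<in> T j")
    case True
    then have "ennreal ((indicator (T j) x * tube_count J x) powr q)
        \<le> ennreal (1 + (\<Sum>km\<in>?I. tube_count (dyadic_group j M km) x powr q))"
      using tube_count_powr_le[OF j _ M] by (intro ennreal_leI) simp
    then show ?thesis using True by (simp add: ennreal_plus sum_nonneg)
  qed (use q_pos in simp)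
  have "(\<integral>\<^sup>+x. ennreal ((indicator (T j) x * tube_count J x) powr q) \<partial>\<mu>)
      \<le> (\<integral>\<^sup>+x. indicator (T j) x
            + (\<Sum>km\<in>?I. ennreal ((indicator (T j) x * tube_count (dyadic_group j M km) x) powr q)) \<partial>\<mu>)"
    by (intro nn_integral_mono pointwise)
  also have "\<dots> = emeasure \<mu> (T j)
      + (\<Sum>km\<in>?I. (\<integral>\<^sup>+x. ennreal ((indicator (T j) x * tube_count (dyadic_group j M km) x) powr q) \<partial>\<mu>))"
    by (simp add: nn_integral_add nn_integral_sum[symmetric])
  also have "\<dots> \<le> ennreal (c2 * \<delta> powr Tx) + (\<Sum>km\<in>?I. ennreal (group_const * ?E))"
    using emeasure_btube_le J_mem j \<delta> \<delta>_less_1 nn_integral_dyadic_group_le[OF j M(1)]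
    by (intro add_mono sum_mono) (auto simp: mult.assoc)
  also have "\<dots> = ennreal (c2 * \<delta> powr Tx) + ennreal (real (card ?I) * (group_const * ?E))"
    using group_const_nonneg by (subst sum_const_ennreal) auto
  also have "\<dots> = ennreal (c2 * \<delta> powr Tx + real (card ?I) * (group_const * ?E))"
    using c2_pos group_const_nonneg by (intro ennreal_plus[symmetric]) auto
  also have "\<dots> \<le> ennreal ((c2 + real ((M+1) * (M+1)) * group_const) * ?E)"
    using mult_left_mono[OF one_le_powr_gain[of \<delta>], of "c2 * \<delta> powr Tx"] c2_pos \<delta> I
    by (intro ennreal_leI) (simp add: algebra_simps)
  finally show ?thesis by (simp add: mult.assoc)
qed

lemma nn_integral_cluster_le:
  assumes M: "1/2^M \<le> \<delta>" "M \<ge> 1"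
  shows "(\<integral>\<^sup>+x. ennreal (tube_count J x powr (1+q)) \<partial>\<mu>)
     \<le> ennreal (real (card J) * ((c2 + real ((M+1) * (M+1)) * group_const)
                                  * \<delta> powr Tx * \<delta> powr (1 - q * (lam + \<alpha>))))"
proof -
  have pointwise: "ennreal (tube_count J x powr (1+q))
      = (\<Sum>j\<in>J. ennreal ((indicator (T j) x * tube_count J x) powr q))" for x
  proof -
    have "tube_count J x powr (1+q) = tube_count J x * tube_count J x powr q"
      by (simp add: powr_add sum_nonneg)
    also have "\<dots> = (\<Sum>j\<in>J. indicator (T j) x * tube_count J x powr q)"
      by (simp add: sum_distrib_right)
    also have "\<dots> = (\<Sum>j\<in>J. (indicator (T j) x * tube_count J x) powr q)"
      by (intro sum.cong) (auto simp: indicator_def)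
    finally show ?thesis by (simp add: sum_nonneg)
  qed
  have "(\<integral>\<^sup>+x. ennreal (tube_count J x powr (1+q)) \<partial>\<mu>)
      = (\<Sum>j\<in>J. (\<integral>\<^sup>+x. ennreal ((indicator (T j) x * tube_count J x) powr q) \<partial>\<mu>))"
    unfolding pointwise by (rule nn_integral_sum) auto
  also have "\<dots> \<le> (\<Sum>j\<in>J. ennreal ((c2 + real ((M+1) * (M+1)) * group_const)
                                      * \<delta> powr Tx * \<delta> powr (1 - q * (lam + \<alpha>))))"
    by (intro sum_mono nn_integral_tube_le M)
  also have "\<dots> = ennreal (real (card J) * ((c2 + real ((M+1) * (M+1)) * group_const)
                                            * \<delta> powr Tx * \<delta> powr (1 - q * (lam + \<alpha>))))"
    using c2_pos group_const_nonneg by (intro sum_const_ennreal) simp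
  finally show ?thesis .
qed

end

lemma nn_integral_powr_sum_indicator_le_cover:
  fixes M :: "'b measure" and T :: "nat \<Rightarrow> 'b set"
  assumes CL: "finite CL" "\<And>c. c \<in> CL \<Longrightarrow> c \<subseteq> {..<N}" "{..<N} \<subseteq> \<Union>CL"
    and T: "\<And>i. T i \<in> sets M" and p: "p \<ge> 1" and K: "K \<ge> 0"
    and classes: "\<And>c. c \<in> CL \<Longrightarrow>
      (\<integral>\<^sup>+x. ennreal ((\<Sum>i\<in>c. indicator (T i) x) powr p) \<partial>M) \<le> ennreal (real (card c) * K)"
  shows "(\<integral>\<^sup>+x. ennreal ((\<Sum>j<N. indicator (T j) x) powr p) \<partial>M)
     \<le> ennreal (real (card CL) powr (p+1) * K * real N)"
proof -
  let ?f = "\<lambda>c x. (\<Sum>i\<in>c. indicator (T i) x :: real)"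
  have pointwise: "ennreal ((\<Sum>j<N. indicator (T j) x) powr p)
      \<le> ennreal (real (card CL) powr p) * (\<Sum>c\<in>CL. ennreal (?f c x powr p))" for x
  proof -
    have "(\<Sum>j<N. indicator (T j) x :: real) \<le> (\<Sum>c\<in>CL. ?f c x)"
      using CL finite_subset[OF CL(2)] by (intro sum_le_sum_of_cover) auto
    then have "(\<Sum>j<N. indicator (T j) x :: real) powr p \<le> (\<Sum>c\<in>CL. ?f c x) powr p"
      using p by (intro powr_mono2) (auto intro: sum_nonneg)
    also have "\<dots> \<le> real (card CL) powr p * (\<Sum>c\<in>CL. ?f c x powr p)"
      using p CL by (intro sum_powr_le_card_powr) (auto intro: sum_nonneg)
    finally have "ennreal ((\<Sum>j<N. indicator (T j) x) powr p)
        \<le> ennreal (real (card CL) powr p * (\<Sum>c\<in>CL. ?f c x powr p))"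
      by (rule ennreal_leI)
    also have "\<dots> = ennreal (real (card CL) powr p) * ennreal (\<Sum>c\<in>CL. ?f c x powr p)"
      by (intro ennreal_mult) (auto intro: sum_nonneg)
    finally show ?thesis by simp
  qed
  have "(\<integral>\<^sup>+x. ennreal ((\<Sum>j<N. indicator (T j) x) powr p) \<partial>M)
      \<le> (\<integral>\<^sup>+x. ennreal (real (card CL) powr p) * (\<Sum>c\<in>CL. ennreal (?f c x powr p)) \<partial>M)"
    by (intro nn_integral_mono pointwise)
  also have "\<dots> = ennreal (real (card CL) powr p) * (\<Sum>c\<in>CL. \<integral>\<^sup>+x. ennreal (?f c x powr p) \<partial>M)"
  proof -
    have "(\<integral>\<^sup>+x. (\<Sum>c\<in>CL. ennreal (?f c x powr p)) \<partial>M) = (\<Sum>c\<in>CL. \<integral>\<^sup>+x. ennreal (?f c x powr p) \<partial>M)"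
      using T by (intro nn_integral_sum) auto
    then show ?thesis using T by (subst nn_integral_cmult) auto
  qed
  also have "\<dots> \<le> ennreal (real (card CL) powr p) * (\<Sum>c\<in>CL. ennreal (real N * K))"
  proof (intro mult_left_mono sum_mono order_trans[OF classes] ennreal_leI mult_right_mono K)
    fix c assume "c \<in> CL"
    then show "real (card c) \<le> real N" using card_mono[OF _ CL(2)] by fastforce
  qed auto
  also have "\<dots> = ennreal (real (card CL) powr p) * ennreal (real (card CL) * (real N * K))"
    using K by (subst sum_const_ennreal) auto
  also have "\<dots> = ennreal (real (card CL) powr p * (real (card CL) * (real N * K)))"
    using K by (subst ennreal_mult[symmetric]) auto
  also have "real (card CL) powr p * (real (card CL) * (real N * K)) = real (card CL) powr (p+1) * K * real N"
    using p by (cases "card CL = 0") (simp_all add: powr_add mult_ac)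
  finally show ?thesis .
qed

context hairbrush_setting
begin

lemma nn_integral_le_of_card_le:
  assumes \<delta>: "0 < \<delta>" "\<delta> < 1" and mem: "\<forall>j<N. us j \<in> Y \<and> as j \<in> A" and N: "N \<le> Nb"
  shows "(\<integral>\<^sup>+x. ennreal ((\<Sum>j<N. indicator (TB \<delta> (us j) (as j)) x) powr (1+q)) \<partial>\<mu>)
     \<le> ennreal (real Nb powr q * c2 * \<delta> powr Tx * real N)"
proof -
  have pointwise: "ennreal ((\<Sum>j<N. indicator (TB \<delta> (us j) (as j)) x) powr (1+q))
     \<le> ennreal (real Nb powr q) * (\<Sum>j<N. indicator (TB \<delta> (us j) (as j)) x)" for x
  proof -
    define F where "F = (\<Sum>j<N. indicator (TB \<delta> (us j) (as j)) x :: real)"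
    have F0: "F \<ge> 0" by (simp add: F_def sum_nonneg)
    have "F \<le> (\<Sum>j<N. 1)" unfolding F_def by (intro sum_mono) (simp add: indicator_def)
    then have "F \<le> real Nb" using N by simp
    then have "F * F powr q \<le> F * real Nb powr q" using F0 q_pos by (intro mult_left_mono powr_mono2) auto
    then have "ennreal (F powr (1+q)) \<le> ennreal (real Nb powr q) * ennreal F"
      using F0 by (simp add: powr_add ennreal_mult[symmetric] mult.commute ennreal_leI)
    then show ?thesis by (simp add: F_def ennreal_indicator[symmetric])
  qed
  have "(\<integral>\<^sup>+x. ennreal ((\<Sum>j<N. indicator (TB \<delta> (us j) (as j)) x) powr (1+q)) \<partial>\<mu>)
      \<le> (\<integral>\<^sup>+x. ennreal (real Nb powr q) * (\<Sum>j<N. indicator (TB \<delta> (us j) (as j)) x) \<partial>\<mu>)"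
    by (intro nn_integral_mono pointwise)
  also have "\<dots> = ennreal (real Nb powr q) * (\<Sum>j<N. emeasure \<mu> (TB \<delta> (us j) (as j)))"
    by (subst nn_integral_cmult) (auto simp: nn_integral_sum)
  also have "\<dots> \<le> ennreal (real Nb powr q) * (\<Sum>j<N. ennreal (c2 * \<delta> powr Tx))"
    using emeasure_btube_le mem \<delta> by (intro mult_left_mono sum_mono) auto
  also have "\<dots> = ennreal (real Nb powr q) * ennreal (real N * (c2 * \<delta> powr Tx))"
    using c2_pos by (subst sum_const_ennreal) auto
  also have "\<dots> = ennreal (real Nb powr q * c2 * \<delta> powr Tx * real N)"
    using c2_pos by (subst ennreal_mult[symmetric]) (auto simp: mult_ac)
  finally show ?thesis .
qed

lemma nn_integral_class_le:
  fixes c :: "nat set"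
  assumes \<delta>: "0 < \<delta>" "\<delta> \<le> 1/2" and c: "c \<subseteq> {..<N}"
    and mem: "\<forall>j<N. us j \<in> Y \<and> as j \<in> A" and ua: "u \<in> Y" "a \<in> A"
    and sep: "\<forall>j<N. \<forall>k<N. j \<noteq> k \<longrightarrow> dist (us j) (us k) > \<delta>"
    and meet: "\<forall>j<N. TB \<delta> u a \<inter> TB \<delta> (us j) (as j) \<noteq> {}"
    and M: "1/2^M \<le> \<delta>" "M \<ge> 1" and vw: "v \<in> Y" "w \<in> Y"
    and cluster: "card c \<le> 1 \<or> (\<exists>R. 0 < R \<and> R < 1 \<and> (\<forall>i\<in>c. \<forall>k\<in>c. dist (us i) (us k) \<le> R) \<and>
                 (\<forall>i\<in>c. dist (us i) u \<ge> R/8) \<and> R + \<delta>/2 < dist v w)"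
  shows "(\<integral>\<^sup>+x. ennreal ((\<Sum>i\<in>c. indicator (TB \<delta> (us i) (as i)) x) powr (1+q)) \<partial>\<mu>)
     \<le> ennreal (real (card c) * ((c2 + real ((M+1) * (M+1)) * group_const)
                                  * \<delta> powr Tx * \<delta> powr (1 - q * (lam + \<alpha>))))"
proof (cases "card c \<le> 1")
  case True
  have c_fin: "finite c" using c finite_subset by blast
  have "(\<integral>\<^sup>+x. ennreal ((\<Sum>i\<in>c. indicator (TB \<delta> (us i) (as i)) x) powr (1+q)) \<partial>\<mu>)
      \<le> ennreal (real (card c) * (c2 * \<delta> powr Tx))"
  proof (cases "c = {}")
    case False
    then obtain i where c1: "c = {i}" using True c_fin by (metis card_0_eq card_1_singletonE le_neq_implies_less less_one)
    have "(\<integral>\<^sup>+x. ennreal ((\<Sum>i\<in>c. indicator (TB \<delta> (us i) (as i)) x) powr (1+q)) \<partial>\<mu>)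
        = (\<integral>\<^sup>+x. indicator (TB \<delta> (us i) (as i)) x \<partial>\<mu>)"
      using q_pos by (intro nn_integral_cong) (simp add: c1 indicator_def)
    also have "\<dots> = emeasure \<mu> (TB \<delta> (us i) (as i))" by simp
    also have "\<dots> \<le> ennreal (c2 * \<delta> powr Tx)" using emeasure_btube_le mem c c1 \<delta> by auto
    finally show ?thesis using c1 by simp
  qed (use q_pos in simp)
  also have "\<dots> \<le> ennreal (real (card c) * ((c2 + real ((M+1) * (M+1)) * group_const)
                                             * \<delta> powr Tx * \<delta> powr (1 - q * (lam + \<alpha>))))"
  proof (intro ennreal_leI mult_left_mono)
    have "c2 * \<delta> powr Tx \<le> c2 * \<delta> powr Tx * \<delta> powr (1 - q * (lam + \<alpha>))"
      using mult_left_mono[OF one_le_powr_gain[of \<delta>], of "c2 * \<delta> powr Tx"] c2_pos \<delta> by simp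
    also have "\<dots> \<le> (c2 + real ((M+1) * (M+1)) * group_const) * \<delta> powr Tx * \<delta> powr (1 - q * (lam + \<alpha>))"
      using group_const_nonneg by (intro mult_right_mono) auto
    finally show "c2 * \<delta> powr Tx
        \<le> (c2 + real ((M+1) * (M+1)) * group_const) * \<delta> powr Tx * \<delta> powr (1 - q * (lam + \<alpha>))" .
  qed auto
  finally show ?thesis .
next
  case False
  then obtain R where R: "0 < R" "R < 1" "\<forall>i\<in>c. \<forall>k\<in>c. dist (us i) (us k) \<le> R"
    "\<forall>i\<in>c. dist (us i) u \<ge> R/8" "R + \<delta>/2 < dist v w" using cluster by blast
  interpret C: hairbrush_cluster \<mu> d' Y \<nu> A It W S Tx \<alpha> lam c2 b C' c0t C0t q \<delta> us as u a c R v w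
    using \<delta> c mem ua sep meet R vw finite_subset[OF c]
    by unfold_locales (auto simp: subset_iff)
  show ?thesis using C.nn_integral_cluster_le[OF M] .
qed

end

lemma polylog_factor_le:
  fixes c G q L0 :: real and M F :: nat
  assumes cG: "c \<ge> 0" "G \<ge> 0" and q: "0 \<le> q" "q \<le> 1" and M: "real M \<le> L0 + 2"
  shows "real (M + F + 2) powr (2+q) * (c + real ((M+1) * (M+1)) * G) \<le> (c + G) * (real F + 4 + L0)^5"
proof -
  define L where "L = real (M + F + 2)"
  have L: "L \<ge> 1" "real (M+1) \<le> L" by (auto simp: L_def)
  have "L powr (2+q) \<le> L powr (real 3)" using L q by (intro powr_mono) auto
  then have L3: "L powr (2+q) \<le> L^3" using L by (simp add: powr_realpow)
  have "c + real ((M+1) * (M+1)) * G \<le> (c + G) * real ((M+1) * (M+1))"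
    using cG by (simp add: algebra_simps)
  also have "\<dots> \<le> (c + G) * L^2"
  proof (intro mult_left_mono)
    have "real (M+1) * real (M+1) \<le> L * L" using L by (intro mult_mono) auto
    then show "real ((M+1) * (M+1)) \<le> L^2" by (simp only: of_nat_mult power2_eq_square)
  qed (use cG in auto)
  finally have L2: "c + real ((M+1) * (M+1)) * G \<le> (c + G) * L^2" .
  have "L powr (2+q) * (c + real ((M+1) * (M+1)) * G) \<le> L^3 * ((c + G) * L^2)"
    using L3 L2 cG L by (intro mult_mono) auto
  also have "\<dots> = (c + G) * L^5" by (simp add: power_add[symmetric] mult_ac)
  also have "\<dots> \<le> (c + G) * (real F + 4 + L0)^5"
    using M L cG unfolding L_def by (intro mult_left_mono power_mono) auto
  finally show ?thesis unfolding L_def .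
qed

lemma card_le_1_of_separated_in_cball:
  fixes us :: "nat \<Rightarrow> 'z::metric_space"
  assumes c: "finite c" "\<forall>i\<in>c. dist (us i) u \<le> \<delta>/2"
    and sep: "\<forall>i\<in>c. \<forall>k\<in>c. i \<noteq> k \<longrightarrow> dist (us i) (us k) > \<delta>"
  shows "card c \<le> 1"
proof -
  have "i = k" if "i \<in> c" "k \<in> c" for i k
  proof (rule ccontr)
    assume "i \<noteq> k"
    moreover have "dist (us i) u \<le> \<delta>/2" "dist (us k) u \<le> \<delta>/2" using c that by auto
    then have "dist (us i) (us k) \<le> \<delta>"
      using dist_triangle[of "us i" "us k" u] dist_commute[of u "us k"] by linarith
    ultimately show False using sep that by fastforce
  qed
  then show ?thesis using card_le_Suc0_iff_eq[OF c(1)] by simp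
qed

lemma dyadic_shell_is_cluster:
  fixes us :: "nat \<Rightarrow> 'z::metric_space"
  assumes R0: "0 < R0" "R0 \<le> 1/4" "2 * R0 + \<delta>/2 < dist v w"
    and shell: "\<forall>i\<in>c. R0/2^m/2 < dist (us i) u \<and> dist (us i) u \<le> R0/2^m"
  shows "\<exists>R. 0 < R \<and> R < 1 \<and> (\<forall>i\<in>c. \<forall>k\<in>c. dist (us i) (us k) \<le> R) \<and>
           (\<forall>i\<in>c. dist (us i) u \<ge> R/8) \<and> R + \<delta>/2 < dist v w"
proof (intro exI conjI)
  define R where "R = 2 * (R0/2^m)"
  have "R \<le> 2 * R0" unfolding R_def using R0 by (simp add: divide_le_eq)
  then show "R < 1" "R + \<delta>/2 < dist v w" using R0 by auto
  show "0 < R" unfolding R_def using R0 by simp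
  show "\<forall>i\<in>c. \<forall>k\<in>c. dist (us i) (us k) \<le> R"
  proof (intro ballI)
    fix i k assume "i \<in> c" "k \<in> c"
    then have "dist (us i) u \<le> R0/2^m" "dist (us k) u \<le> R0/2^m" using shell by auto
    then show "dist (us i) (us k) \<le> R"
      using dist_triangle[of "us i" "us k" u] dist_commute[of u "us k"] unfolding R_def by linarith
  qed
  show "\<forall>i\<in>c. dist (us i) u \<ge> R/8"
    using shell R0 unfolding R_def by (auto simp: field_simps)
qed

lemma net_piece_is_cluster:
  fixes us :: "nat \<Rightarrow> 'z::metric_space"
  assumes R0: "0 < R0" "R0 \<le> 1/4" "2 * R0 + \<delta>/2 < dist v w"
    and piece: "\<forall>i\<in>c. R0 < dist (us i) u \<and> dist y (us i) < R0/2"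
  shows "\<exists>R. 0 < R \<and> R < 1 \<and> (\<forall>i\<in>c. \<forall>k\<in>c. dist (us i) (us k) \<le> R) \<and>
           (\<forall>i\<in>c. dist (us i) u \<ge> R/8) \<and> R + \<delta>/2 < dist v w"
proof (intro exI conjI)
  show "\<forall>i\<in>c. \<forall>k\<in>c. dist (us i) (us k) \<le> R0"
  proof (intro ballI)
    fix i k assume "i \<in> c" "k \<in> c"
    then have "dist y (us i) < R0/2" "dist y (us k) < R0/2" using piece by auto
    then show "dist (us i) (us k) \<le> R0"
      using dist_triangle[of "us i" "us k" y] dist_commute[of y "us i"] by linarith
  qed
  show "\<forall>i\<in>c. dist (us i) u \<ge> R0/8" using piece R0 by auto
qed (use R0 in auto)

text \<open>The hairbrush splits into \<open>O(M)\<close> clusters: the dyadic shells \<open>R0/2^(k+1) < |u\<^sub>j - u| \<le> R0/2^k\<close>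
  around the core direction, the pieces of a fixed \<open>R0/2\<close>-net of \<open>Y\<close> away from the core, and the
  directions within \<open>R0/2^(M+1)\<close> of the core, which are at most one since \<open>2^-M \<le> \<delta>\<close>.\<close>

lemma hairbrush_classes:
  fixes us :: "nat \<Rightarrow> 'z::metric_space"
  assumes R0: "0 < R0" "R0 \<le> 1/4" "2 * R0 + \<delta>/2 < dist v w"
    and net: "finite Fc" "Y \<subseteq> (\<Union>y\<in>Fc. ball y (R0/2))"
    and mem: "\<forall>j<N. us j \<in> Y" and sep: "\<forall>j<N. \<forall>k<N. j \<noteq> k \<longrightarrow> dist (us j) (us k) > \<delta>"
    and M: "1/2^M \<le> \<delta>"
  obtains CL where "finite CL" "card CL \<le> M + card Fc + 2" "\<And>c. c \<in> CL \<Longrightarrow> c \<subseteq> {..<N}"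
    "{..<N} \<subseteq> \<Union>CL"
    "\<And>c. c \<in> CL \<Longrightarrow> card c \<le> 1 \<or> (\<exists>R. 0 < R \<and> R < 1 \<and> (\<forall>i\<in>c. \<forall>k\<in>c. dist (us i) (us k) \<le> R) \<and>
                 (\<forall>i\<in>c. dist (us i) u \<ge> R/8) \<and> R + \<delta>/2 < dist v w)"
proof
  define \<rho> where "\<rho> j = dist (us j) u" for j
  define shell where "shell k = {j. j < N \<and> R0/2^k/2 < \<rho> j \<and> \<rho> j \<le> R0/2^k}" for k :: nat
  define far where "far y = {j. j < N \<and> R0 < \<rho> j \<and> us j \<in> ball y (R0/2)}" for y
  define core where "core = {j. j < N \<and> \<rho> j \<le> R0/2^M/2}"
  define CL where "CL = shell ` {0..M} \<union> far ` Fc \<union> {core}"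
  show "finite CL" using net by (simp add: CL_def)
  have "card CL \<le> card (shell ` {0..M} \<union> far ` Fc) + card {core}"
    unfolding CL_def by (rule card_Un_le)
  also have "\<dots> \<le> card (shell ` {0..M}) + card (far ` Fc) + 1"
    using card_Un_le[of "shell ` {0..M}" "far ` Fc"] by simp
  also have "\<dots> \<le> (M+1) + card Fc + 1"
    using card_image_le[of "{0..M}" shell] card_image_le[OF net(1), of far] by simp
  finally show "card CL \<le> M + card Fc + 2" by simp
  show sub: "c \<subseteq> {..<N}" if "c \<in> CL" for c
    using that by (auto simp: CL_def shell_def far_def core_def)
  show "{..<N} \<subseteq> \<Union>CL"
  proof
    fix j assume j: "j \<in> {..<N}"
    consider "\<rho> j \<le> R0/2^M/2" | "R0/2^M/2 < \<rho> j" "\<rho> j \<le> R0" | "R0 < \<rho> j" by linarith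
    then show "j \<in> \<Union>CL"
    proof cases
      case 2
      then obtain k where "k \<le> M" "R0/2^k/2 < \<rho> j" "\<rho> j \<le> R0/2^k"
        using ex_dyadic_shell[OF R0(1), of "\<rho> j" M] by (auto simp: field_simps)
      then have "j \<in> shell k" "k \<in> {0..M}" using j by (auto simp: shell_def)
      then show ?thesis unfolding CL_def by blast
    next
      case 3
      obtain y where "y \<in> Fc" "us j \<in> ball y (R0/2)" using net mem j by blast
      then have "j \<in> far y" "y \<in> Fc" using 3 j by (auto simp: far_def)
      then show ?thesis unfolding CL_def by blast
    next
      case 1
      then have "j \<in> core" using j by (simp add: core_def)
      then show ?thesis unfolding CL_def by blast
    qed
  qed
  fix c assume "c \<in> CL"
  then consider (shell) k where "c = shell k" | (far) y where "c = far y" | (core) "c = core"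
    unfolding CL_def by blast
  then show "card c \<le> 1 \<or> (\<exists>R. 0 < R \<and> R < 1 \<and> (\<forall>i\<in>c. \<forall>k\<in>c. dist (us i) (us k) \<le> R) \<and>
                 (\<forall>i\<in>c. dist (us i) u \<ge> R/8) \<and> R + \<delta>/2 < dist v w)"
  proof cases
    case shell
    then show ?thesis
      using dyadic_shell_is_cluster[OF R0, where c=c and us=us and u=u and m=k] by (auto simp: shell_def \<rho>_def)
  next
    case far
    then show ?thesis
      using net_piece_is_cluster[OF R0, where c=c and us=us and u=u and y=y] by (auto simp: far_def \<rho>_def dist_commute)
  next
    case core
    have "finite c" using sub[OF \<open>c \<in> CL\<close>] finite_subset by blast
    moreover have "R0/2^M \<le> 1/2^M" using R0 by (simp add: divide_right_mono)
    then have "R0/2^M/2 \<le> \<delta>/2" using M by simp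
    then have "\<forall>i\<in>c. dist (us i) u \<le> \<delta>/2" using core by (auto simp: core_def \<rho>_def)
    moreover have "\<forall>i\<in>c. \<forall>k\<in>c. i \<noteq> k \<longrightarrow> dist (us i) (us k) > \<delta>" using sep core by (auto simp: core_def)
    ultimately show ?thesis by (intro disjI1 card_le_1_of_separated_in_cball)
  qed
qed

lemma hairbrush_card_le_1:
  assumes hb: "hairbrush Y A It W N \<delta> us as" and Y: "\<forall>v\<in>Y. \<forall>w\<in>Y. v = w"
  shows "N \<le> 1"
proof (rule ccontr)
  assume "\<not> N \<le> 1"
  then have "dist (us 0) (us 1) > \<delta>" "us 0 \<in> Y" "us 1 \<in> Y" "\<delta> > 0"
    using hb unfolding hairbrush_def by auto
  moreover have "us 0 = us 1" using Y \<open>us 0 \<in> Y\<close> \<open>us 1 \<in> Y\<close> by blast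
  ultimately show False by simp
qed

context hairbrush_setting
begin

lemma one_le_powr_gain_eps: "0 < \<delta> \<Longrightarrow> \<delta> \<le> 1 \<Longrightarrow> \<epsilon> > 0 \<Longrightarrow> 1 \<le> \<delta> powr (1 - q * (lam + \<alpha>) - \<epsilon>)"
  using powr_mono'[of "1 - q * (lam + \<alpha>) - \<epsilon>" 0 \<delta>] gain_exponent_nonpos by simp

lemma nn_integral_hairbrush_le_of_card:
  assumes \<epsilon>: "\<epsilon> > 0" and hb: "hairbrush Y A It W N \<delta> us as" and N: "N \<le> Nb"
    and C: "real Nb powr q * c2 \<le> C"
  shows "(\<integral>\<^sup>+x. ennreal ((\<Sum>j<N. indicator (TB \<delta> (us j) (as j)) x) powr (1+q)) \<partial>\<mu>)
       \<le> ennreal (C * \<delta> powr Tx * real N * \<delta> powr (1 - q * (lam + \<alpha>) - \<epsilon>))"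
proof -
  have \<delta>: "0 < \<delta>" "\<delta> < 1" and mem: "\<forall>j<N. us j \<in> Y \<and> as j \<in> A"
    using hb unfolding hairbrush_def by auto
  have "0 \<le> C" using C c2_pos by (smt (verit) powr_ge_zero mult_nonneg_nonneg)
  have "real Nb powr q * c2 * \<delta> powr Tx * real N \<le> C * \<delta> powr Tx * real N"
    using C by (intro mult_right_mono) auto
  also have "\<dots> \<le> C * \<delta> powr Tx * real N * \<delta> powr (1 - q * (lam + \<alpha>) - \<epsilon>)"
    using mult_left_mono[OF one_le_powr_gain_eps[OF \<delta>(1) _ \<epsilon>], of "C * \<delta> powr Tx * real N"] \<open>0 \<le> C\<close> \<delta>
    by simp
  finally show ?thesis using nn_integral_le_of_card_le[OF \<delta> mem N] by (simp add: ennreal_leI order_trans)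
qed

lemma nn_integral_hairbrush_le_small:
  assumes \<epsilon>: "\<epsilon> > 0" and hb: "hairbrush Y A It W N \<delta> us as" and \<delta>: "\<delta> \<le> 1/2"
    and vw: "v \<in> Y" "w \<in> Y" and R0: "0 < R0" "R0 \<le> 1/4" "2 * R0 + \<delta>/2 < dist v w"
    and net: "finite Fc" "Y \<subseteq> (\<Union>y\<in>Fc. ball y (R0/2))"
  shows "(\<integral>\<^sup>+x. ennreal ((\<Sum>j<N. indicator (TB \<delta> (us j) (as j)) x) powr (1+q)) \<partial>\<mu>)
       \<le> ennreal ((c2 + group_const) * (real (card Fc) + 4 + (1/ln 2) * (5/\<epsilon>))^5
                  * \<delta> powr Tx * real N * \<delta> powr (1 - q * (lam + \<alpha>) - \<epsilon>))"
proof -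
  have \<delta>1: "0 < \<delta>" "\<delta> < 1" and mem: "\<forall>j<N. us j \<in> Y \<and> as j \<in> A"
    and sep: "\<forall>j<N. \<forall>k<N. j \<noteq> k \<longrightarrow> dist (us j) (us k) > \<delta>"
    using hb unfolding hairbrush_def by auto
  obtain u a where ua: "u \<in> Y" "a \<in> A" and meet: "\<forall>j<N. TB \<delta> u a \<inter> TB \<delta> (us j) (as j) \<noteq> {}"
    using hb unfolding hairbrush_def by blast
  obtain M where M: "1/2^M \<le> \<delta>" "M \<ge> 1" "real M \<le> ln (1/\<delta>) / ln 2 + 2"
    using ex_dyadic_scale[OF \<delta>1] .
  define K where "K = (c2 + real ((M+1) * (M+1)) * group_const) * \<delta> powr Tx * \<delta> powr (1 - q * (lam + \<alpha>))"
  have K: "K \<ge> 0" using c2_pos group_const_nonneg by (simp add: K_def)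
  obtain CL where CL: "finite CL" "card CL \<le> M + card Fc + 2" "\<And>c. c \<in> CL \<Longrightarrow> c \<subseteq> {..<N}"
    "{..<N} \<subseteq> \<Union>CL"
    "\<And>c. c \<in> CL \<Longrightarrow> card c \<le> 1 \<or> (\<exists>R. 0 < R \<and> R < 1 \<and> (\<forall>i\<in>c. \<forall>k\<in>c. dist (us i) (us k) \<le> R) \<and>
                 (\<forall>i\<in>c. dist (us i) u \<ge> R/8) \<and> R + \<delta>/2 < dist v w)"
    using hairbrush_classes[OF R0 net _ sep M(1), where u=u] mem by blast
  have "(\<integral>\<^sup>+x. ennreal ((\<Sum>j<N. indicator (TB \<delta> (us j) (as j)) x) powr (1+q)) \<partial>\<mu>)
      \<le> ennreal (real (card CL) powr (2+q) * K * real N)"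
    using nn_integral_powr_sum_indicator_le_cover[OF CL(1,3,4) _ _ K,
        of "\<lambda>i. TB \<delta> (us i) (as i)" \<mu> "1+q"]
      nn_integral_class_le[OF \<delta>1(1) \<delta> CL(3) mem ua sep meet M(1,2) vw CL(5)] q_pos
    by (simp add: K_def add_ac)
  also have "\<dots> \<le> ennreal (real (M + card Fc + 2) powr (2+q) * K * real N)"
    using CL(2) q_pos K by (intro ennreal_leI mult_right_mono powr_mono2) auto
  also have "\<dots> \<le> ennreal ((c2 + group_const) * (real (card Fc) + 4 + (1/ln 2) * ln (1/\<delta>))^5
                    * (\<delta> powr Tx * \<delta> powr (1 - q * (lam + \<alpha>)) * real N))"
  proof (intro ennreal_leI)
    have "real (M + card Fc + 2) powr (2+q) * (c2 + real ((M+1) * (M+1)) * group_const)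
        \<le> (c2 + group_const) * (real (card Fc) + 4 + (1/ln 2) * ln (1/\<delta>))^5"
      using polylog_factor_le[OF less_imp_le[OF c2_pos] group_const_nonneg _ q(2) M(3)] q_pos by simp
    from mult_right_mono[OF this, of "\<delta> powr Tx * \<delta> powr (1 - q * (lam + \<alpha>)) * real N"]
    show "real (M + card Fc + 2) powr (2+q) * K * real N
        \<le> (c2 + group_const) * (real (card Fc) + 4 + (1/ln 2) * ln (1/\<delta>))^5
            * (\<delta> powr Tx * \<delta> powr (1 - q * (lam + \<alpha>)) * real N)"
      by (simp add: K_def mult_ac)
  qed
  also have "\<dots> \<le> ennreal ((c2 + group_const) * ((real (card Fc) + 4 + (1/ln 2) * (5/\<epsilon>))^5 * \<delta> powr (-\<epsilon>))
                    * (\<delta> powr Tx * \<delta> powr (1 - q * (lam + \<alpha>)) * real N))"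
    using affine_ln_power_le_powr[OF \<delta>1 \<epsilon>, of "real (card Fc) + 4" "1/ln 2" 5] c2_pos group_const_nonneg
    by (intro ennreal_leI mult_right_mono mult_left_mono) auto
  also have "\<dots> = ennreal ((c2 + group_const) * (real (card Fc) + 4 + (1/ln 2) * (5/\<epsilon>))^5
                  * \<delta> powr Tx * real N * \<delta> powr (1 - q * (lam + \<alpha>) - \<epsilon>))"
    by (simp add: powr_diff powr_minus divide_inverse mult_ac)
  finally show ?thesis .
qed

lemma hairbrush_estimate:
  assumes \<epsilon>: "\<epsilon> > 0"
  shows "\<exists>C>0. \<forall>N \<delta> us as. hairbrush Y A It W N \<delta> us as \<longrightarrow>
     (\<integral>\<^sup>+x. ennreal ((\<Sum>j<N. indicator (TB \<delta> (us j) (as j)) x) powr (1+q)) \<partial>\<mu>)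
       \<le> ennreal (C * \<delta> powr Tx * real N * \<delta> powr (1 - q * (lam + \<alpha>) - \<epsilon>))"
proof (cases "\<exists>v\<in>Y. \<exists>w\<in>Y. v \<noteq> w")
  case False
  then have N_le_1: "N \<le> 1" if "hairbrush Y A It W N \<delta> us as" for N \<delta> us as
    using hairbrush_card_le_1[OF that] by blast
  show ?thesis
  proof (intro exI[of _ c2] conjI allI impI)
    fix N \<delta> us as assume hb: "hairbrush Y A It W N \<delta> us as"
    show "(\<integral>\<^sup>+x. ennreal ((\<Sum>j<N. indicator (TB \<delta> (us j) (as j)) x) powr (1+q)) \<partial>\<mu>)
       \<le> ennreal (c2 * \<delta> powr Tx * real N * \<delta> powr (1 - q * (lam + \<alpha>) - \<epsilon>))"
      by (rule nn_integral_hairbrush_le_of_card[OF \<epsilon> hb N_le_1[OF hb]]) simp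
  qed (rule c2_pos)
next
  case True
  then obtain v w where vw: "v \<in> Y" "w \<in> Y" "v \<noteq> w" by blast
  define R0 where "R0 = min (1/4) (dist v w / 8)"
  define \<delta>0 where "\<delta>0 = min (1/2) (dist v w / 2)"
  have R0: "0 < R0" "R0 \<le> 1/4" "R0 \<le> dist v w / 8" using vw by (auto simp: R0_def)
  have \<delta>0: "0 < \<delta>0" "\<delta>0 \<le> 1/2" "\<delta>0 \<le> dist v w / 2" using vw by (auto simp: \<delta>0_def)
  have totally_bounded: "\<exists>F. finite F \<and> F \<subseteq> Y \<and> Y \<subseteq> (\<Union>x\<in>F. ball x e)" if "e > 0" for e
    using seq_compact_imp_totally_bounded[OF compact_imp_seq_compact[OF compact_Y]] that by blast
  obtain Fc where Fc: "finite Fc" "Y \<subseteq> (\<Union>x\<in>Fc. ball x (R0/2))" using totally_bounded[of "R0/2"] R0 by auto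
  obtain F2 where F2: "finite F2" "Y \<subseteq> (\<Union>x\<in>F2. ball x (\<delta>0/2))" using totally_bounded[of "\<delta>0/2"] \<delta>0 by auto
  define Cs where "Cs = (c2 + group_const) * (real (card Fc) + 4 + (1/ln 2) * (5/\<epsilon>))^5"
  define Cb where "Cb = real (card F2) powr q * c2"
  have "0 \<le> (1/ln 2) * (5/\<epsilon>)" using \<epsilon> by (intro mult_nonneg_nonneg) auto
  then have "0 < real (card Fc) + 4 + (1/ln 2) * (5/\<epsilon>)" by linarith
  then have Cs: "Cs > 0" unfolding Cs_def using c2_pos group_const_nonneg by simp
  have Cb: "Cb \<ge> 0" using c2_pos by (simp add: Cb_def)
  show ?thesis
  proof (intro exI[of _ "Cb + Cs"] conjI allI impI)
    show "0 < Cb + Cs" using Cs Cb by simp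
    fix N \<delta> us as assume hb: "hairbrush Y A It W N \<delta> us as"
    have \<delta>: "0 < \<delta>" and mem: "\<forall>j<N. us j \<in> Y" and sep: "\<forall>j<N. \<forall>k<N. j \<noteq> k \<longrightarrow> dist (us j) (us k) > \<delta>"
      using hb unfolding hairbrush_def by auto
    show "(\<integral>\<^sup>+x. ennreal ((\<Sum>j<N. indicator (TB \<delta> (us j) (as j)) x) powr (1+q)) \<partial>\<mu>)
       \<le> ennreal ((Cb + Cs) * \<delta> powr Tx * real N * \<delta> powr (1 - q * (lam + \<alpha>) - \<epsilon>))"
    proof (cases "\<delta> < \<delta>0")
      case True
      have "2 * R0 + \<delta>/2 < dist v w" using R0 \<delta>0 True by linarith
      then have "(\<integral>\<^sup>+x. ennreal ((\<Sum>j<N. indicator (TB \<delta> (us j) (as j)) x) powr (1+q)) \<partial>\<mu>)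
          \<le> ennreal (Cs * \<delta> powr Tx * real N * \<delta> powr (1 - q * (lam + \<alpha>) - \<epsilon>))"
        unfolding Cs_def using nn_integral_hairbrush_le_small[OF \<epsilon> hb _ vw(1,2) R0(1,2) _ Fc] True \<delta>0
        by simp
      also have "\<dots> \<le> ennreal ((Cb + Cs) * \<delta> powr Tx * real N * \<delta> powr (1 - q * (lam + \<alpha>) - \<epsilon>))"
        using Cb by (intro ennreal_leI mult_right_mono) auto
      finally show ?thesis .
    next
      case False
      have "N \<le> card F2" using card_separated_le_card_net[OF F2 _ mem sep] False by simp
      moreover have "real (card F2) powr q * c2 \<le> Cb + Cs" using Cs by (simp add: Cb_def)
      ultimately show ?thesis by (rule nn_integral_hairbrush_le_of_card[OF \<epsilon> hb])
    qed
  qed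
qed

end

lemma axiom_A1_btube_bounds:
  assumes "axiom_A1 \<mu> Q d' Y A I It W S Tx"
  obtains c2 where "c2 > 0"
    "\<forall>a\<in>A. \<forall>\<delta>. 0 < \<delta> \<and> \<delta> < 1 \<longrightarrow> (\<forall>u\<in>Y.
          emeasure \<mu> (btube It W \<delta> u a) \<le> ennreal (c2 * \<delta> powr Tx) \<and>
          (\<forall>B. B \<subseteq> btube It W \<delta> u a \<longrightarrow>
                     emeasure \<mu> B \<le> ennreal c2 * diam2 d' B * ennreal (\<delta> powr Tx)))"
proof -
  from assms obtain c1 c2 where "0 < c1" "c1 \<le> c2" and bounds: "\<forall>a\<in>A. \<forall>\<delta>. 0 < \<delta> \<and> \<delta> < 1 \<longrightarrow>
      (\<forall>u\<in>Y. emeasure \<mu> (btube It W \<delta> u a) \<le> ennreal (c2 * \<delta> powr Tx) \<and>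
        (\<forall>B. B \<subseteq> btube It W \<delta> u a \<longrightarrow> emeasure \<mu> B \<le> ennreal c2 * diam2 d' B * ennreal (\<delta> powr Tx)))"
    unfolding axiom_A1_def by meson
  then show ?thesis using that[OF _ bounds] by simp
qed

lemma hairbrush_setting_of_axioms:
  assumes base: "base_setting \<mu> Q C0 d' Y \<nu> S c0t C0t" and A1: "axiom_A1 \<mu> Q d' Y A I It W S Tx"
    and A3: "axiom_A3 d' Y A It W" and A5: "axiom_A5 Q d' Y A It W S Tx \<theta> \<alpha> lam"
    and q: "1 / (\<alpha> + 1) \<le> q" "q \<le> 1"
  obtains c2 b C' where "hairbrush_setting \<mu> d' Y \<nu> A It W S Tx \<alpha> lam c2 b C' c0t C0t q"
proof -
  obtain c2 where c2: "c2 > 0" "\<forall>a\<in>A. \<forall>\<delta>. 0 < \<delta> \<and> \<delta> < 1 \<longrightarrow> (\<forall>u\<in>Y.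
          emeasure \<mu> (btube It W \<delta> u a) \<le> ennreal (c2 * \<delta> powr Tx) \<and>
          (\<forall>B. B \<subseteq> btube It W \<delta> u a \<longrightarrow>
                     emeasure \<mu> B \<le> ennreal c2 * diam2 d' B * ennreal (\<delta> powr Tx)))"
    using axiom_A1_btube_bounds[OF A1] .
  moreover obtain b where b: "b > 0" "\<forall>a\<in>A. \<forall>a'\<in>A. \<forall>u\<in>Y. \<forall>v\<in>Y. \<forall>\<delta>. 0 < \<delta> \<and> \<delta> < 1 \<and> u \<noteq> v \<longrightarrow>
        diam2 d' (btube It W \<delta> u a \<inter> btube It W \<delta> v a') \<le> ennreal (b * \<delta> / dist u v)"
    using A3 unfolding axiom_A3_def by (elim exE conjE) (rule that; assumption)
  moreover obtain C' where "0 \<le> \<alpha>" "\<alpha> \<le> S - 1" "max (S - \<alpha>) (S - 2 * Tx + 2) \<le> lam" "C' > 0" "\<forall>\<delta> \<beta> \<gamma> (N::nat) us as u a.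
        0 < \<delta> \<and> \<delta> < 1 \<and> 0 < \<beta> \<and> \<beta> < 1 \<and> 0 < \<gamma> \<and> \<gamma> < 1 \<and>
        (\<forall>j<N. us j \<in> Y \<and> as j \<in> A) \<and> u \<in> Y \<and> a \<in> A \<and>
        (\<forall>j<N. \<forall>k<N. j \<noteq> k \<longrightarrow> dist (us j) (us k) > \<delta>) \<and>
        (\<forall>j<N. btube It W \<delta> u a \<inter> btube It W \<delta> (us j) (as j) \<noteq> {} \<and>
                dist (us j) u \<ge> \<beta> / 8) \<longrightarrow>
        (\<forall>j<N. real (card {i. i < N \<and> dist (us i) (us j) \<le> \<beta> \<and>
              btube It W \<delta> (us i) (as i) \<inter> btube It W \<delta> (us j) (as j) \<noteq> {} \<and>
              setdist2 d' (btube It W \<delta> (us i) (as i) \<inter> btube It W \<delta> (us j) (as j))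
                          (btube It W \<delta> (us j) (as j) \<inter> btube It W \<delta> u a) \<ge> ennreal \<gamma>})
           \<le> C' * \<delta> powr (- lam) * \<beta> * \<gamma> powr (- \<alpha>))"
    using A5 unfolding axiom_A5_def by (elim conjE exE) (rule that; assumption)
  ultimately show ?thesis
    using base q unfolding base_setting_def by (intro that hairbrush_setting.intro) simp_all
qed

theorem mainTheorem7:
  fixes \<mu> :: "'x::polish_space measure" and d' :: "'x \<Rightarrow> 'x \<Rightarrow> real"
    and Y :: "'z::metric_space set" and \<nu> :: "'z measure" and A :: "'a set"
    and F I It :: "'z \<Rightarrow> 'a \<Rightarrow> 'x set" and mu :: "'z \<Rightarrow> 'a \<Rightarrow> 'x measure"
    and Q C0 S c0t C0t c c' cb W Tx \<theta> \<alpha> lam :: real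
  assumes "base_setting \<mu> Q C0 d' Y \<nu> S c0t C0t"
    and "family_setting d' Y A F I It mu c c' cb"
    and "axiom_A1 \<mu> Q d' Y A I It W S Tx"
    and "axiom_A2 \<mu> Q Y A F I mu S Tx \<theta>"
    and "axiom_A3 d' Y A It W"
    and "axiom_A4 Y A I It W"
    and "axiom_A5 Q d' Y A It W S Tx \<theta> \<alpha> lam"
  shows "\<forall>\<epsilon>>0. \<forall>p. (\<alpha> + 2) / (\<alpha> + 1) \<le> p \<and> p \<le> 2 \<longrightarrow>
           (\<exists>C>0. \<forall>N \<delta> us as. hairbrush Y A It W N \<delta> us as \<longrightarrow>
              (\<integral>\<^sup>+ x. ennreal ((\<Sum>j<N. indicator (btube It W \<delta> (us j) (as j)) x) powr p) \<partial>\<mu>)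
                \<le> ennreal (C * \<delta> powr Tx * real N *
                            \<delta> powr (lam + \<alpha> + 1 - p * (lam + \<alpha>) - \<epsilon>)))"
proof (intro allI impI)
  \<comment> \<open>Only (A1), (A3) and (A5) enter the estimate; (A2), (A4) and the family structure do not.\<close>
  fix \<epsilon> p :: real
  assume \<epsilon>: "\<epsilon> > 0" and p: "(\<alpha> + 2) / (\<alpha> + 1) \<le> p \<and> p \<le> 2"
  have "0 \<le> \<alpha>" using assms(7) unfolding axiom_A5_def by (rule conjunct1)
  then have "(\<alpha> + 2) / (\<alpha> + 1) = 1 + 1 / (\<alpha> + 1)" by (simp add: field_simps)
  then have q: "1 / (\<alpha> + 1) \<le> p - 1" "p - 1 \<le> 1" using p by linarith+
  obtain c2 b C' where "hairbrush_setting \<mu> d' Y \<nu> A It W S Tx \<alpha> lam c2 b C' c0t C0t (p - 1)"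
    using hairbrush_setting_of_axioms[OF assms(1,3,5,7) q] .
  from hairbrush_setting.hairbrush_estimate[OF this \<epsilon>]
  show "\<exists>C>0. \<forall>N \<delta> us as. hairbrush Y A It W N \<delta> us as \<longrightarrow>
          (\<integral>\<^sup>+ x. ennreal ((\<Sum>j<N. indicator (btube It W \<delta> (us j) (as j)) x) powr p) \<partial>\<mu>)
            \<le> ennreal (C * \<delta> powr Tx * real N * \<delta> powr (lam + \<alpha> + 1 - p * (lam + \<alpha>) - \<epsilon>))"
    by (simp add: algebra_simps)
qed

end
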